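(* Assume $h$ is isotropic and $V=W\oplus W'$ with $W,W'$ maximal totally isotropic subspaces. Then for every $\Lambda\in\mathrm{Latt}^1_{o_D}(W)$, the function $\phi(\Lambda)=\Lambda\oplus\Lambda^{\#,W'}$, $t\mapsto\Lambda(t)\oplus\Lambda^{\#,W'}(t)$, is a self-dual $o_D$-lattice function of $V$, and the map $\phi:\mathrm{Latt}^1_{o_D}(W)\to\mathrm{Latt}^1_h(V)$ is affine and satisfies $\phi(g\Lambda)=i_{W,W'}(g)\phi(\Lambda)$ for all $g\in GL_D(W)$.
   Context: $k$ is a non-Archimedean local field with discrete valuation $\nu$ and residue characteristic different from $2$; $D$ a finite-dimensional central division $k$-algebra, $\nu$ extended to $D$, with $o_D$, $\mathfrak p_D$, $\pi_D$; $\rho$ a continuous involution of $D$; $V$ a finite-dimensional right $D$-space; $h$ a non-degenerate $\epsilon$-hermitian form on $V$ with adjoint involution $\sigma$. For a finite-dimensional right $D$-space $X$, an $o_D$-lattice function is a map $\Lambda$ from $\mathbb R$ to full $o_D$-lattices of $X$ with $\Lambda(r+\nu(\pi_D))=\Lambda(r)\pi_D$, decreasing, left continuous; set $\mathrm{Latt}^1_{o_D}(X)$, with $(g\Lambda)(r)=g\Lambda(r)$ and the affine structure: for $\Lambda,\Lambda'$ with common splitting basis $(v_i)$, $\Lambda(x)=\bigoplus v_i\{\delta:\nu(\delta)\ge x-\alpha_i\}$, $\Lambda'(x)=\bigoplus v_i\{\delta:\nu(\delta)\ge x-\alpha_i'\}$, $t\Lambda+(1-t)\Lambda'$ corresponds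 to $t\alpha_i+(1-t)\alpha_i'$. Self-dual: $\Lambda^\#=\Lambda$ where $M^\#=\{x\in V:h(x,M)\subseteq\mathfrak p_D\}$, $\Lambda^\#(r)=(\bigcup_{s>-r}\Lambda(s))^\#$; $\mathrm{Latt}^1_h(V)$ is the set of self-dual ones. For a lattice $M$ of $W$, $M^{\#,W'}=\{w'\in W':h(w',M)\subseteq\mathfrak p_D\}$, and $\Lambda^{\#,W'}(t)=(\bigcup_{s>-t}\Lambda(s))^{\#,W'}$. For $a\in\mathrm{End}_D(W)$, $a^{\sigma,W'}\in\mathrm{End}_D(W')$ is defined by $\sigma(a\oplus0)=0\oplus a^{\sigma,W'}$, and $i_{W,W'}(g)(w,w')=(g(w),(g^{\sigma,W'})^{-1}(w'))$ for $g\in GL_D(W)$. *)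

theory Defs
  imports Complex_Main "HOL-Library.Extended_Real"
begin

text \<open>D is modelled by a type 'd of class division_ring, nu is the (extended) valuation
 on D with nu 0 = infinity; o_D = {x. nu x >= 0}, p_D = {x. nu x > 0}; pi is a
 uniformizer pi_D.  k is the centre of D.\<close>

definition centre :: "'d::division_ring set" where
  "centre = {z. \<forall>x. z * x = x * z}"

definition oD :: "('d::division_ring \<Rightarrow> ereal) \<Rightarrow> 'd set" where
  "oD \<nu> = {x. \<nu> x \<ge> 0}"

definition pD :: "('d::division_ring \<Rightarrow> ereal) \<Rightarrow> 'd set" where
  "pD \<nu> = {x. \<nu> x > 0}"

definition discrete_valuation :: "('d::division_ring \<Rightarrow> ereal) \<Rightarrow> bool" where
  "discrete_valuation \<nu> \<longleftrightarrow>
     (\<forall>x. \<nu> x = \<infinity> \<longleftrightarrow> x = 0) \<and>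
     (\<forall>x. \<nu> x \<noteq> -\<infinity>) \<and>
     (\<forall>x y. \<nu> (x * y) = \<nu> x + \<nu> y) \<and>
     (\<forall>x y. \<nu> (x + y) \<ge> min (\<nu> x) (\<nu> y)) \<and>
     (\<exists>c::real. c > 0 \<and> \<nu> ` (UNIV - {0}) = {ereal (of_int n * c) | n. True})"

definition uniformizer :: "('d::division_ring \<Rightarrow> ereal) \<Rightarrow> 'd \<Rightarrow> bool" where
  "uniformizer \<nu> \<pi> \<longleftrightarrow> 0 < \<nu> \<pi> \<and> \<nu> \<pi> < \<infinity> \<and> (\<forall>x. 0 < \<nu> x \<longrightarrow> \<nu> \<pi> \<le> \<nu> x)"

definition nu_cauchy :: "('d::division_ring \<Rightarrow> ereal) \<Rightarrow> (nat \<Rightarrow> 'd) \<Rightarrow> bool" where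
  "nu_cauchy \<nu> x \<longleftrightarrow> (\<forall>M::real. \<exists>N. \<forall>m\<ge>N. \<forall>n\<ge>N. \<nu> (x m - x n) \<ge> ereal M)"

definition nu_converges :: "('d::division_ring \<Rightarrow> ereal) \<Rightarrow> (nat \<Rightarrow> 'd) \<Rightarrow> 'd \<Rightarrow> bool" where
  "nu_converges \<nu> x l \<longleftrightarrow> (\<forall>M::real. \<exists>N. \<forall>n\<ge>N. \<nu> (x n - l) \<ge> ereal M)"

definition local_setting :: "('d::division_ring \<Rightarrow> ereal) \<Rightarrow> 'd \<Rightarrow> bool" where
  "local_setting \<nu> \<pi> \<longleftrightarrow>
     discrete_valuation \<nu> \<and> uniformizer \<nu> \<pi> \<and>
     \<comment> \<open>valuation nontrivial on k\<close>
     (\<exists>z\<in>centre. 0 < \<nu> z \<and> \<nu> z < \<infinity>) \<and>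
     \<comment> \<open>k complete\<close>
     (\<forall>x. (\<forall>n. x n \<in> centre) \<longrightarrow> nu_cauchy \<nu> x \<longrightarrow> (\<exists>l\<in>centre. nu_converges \<nu> x l)) \<and>
     \<comment> \<open>residue field of k finite\<close>
     (\<exists>R. finite R \<and> R \<subseteq> centre \<inter> oD \<nu> \<and>
          (\<forall>x\<in>centre \<inter> oD \<nu>. \<exists>r\<in>R. x - r \<in> pD \<nu>)) \<and>
     \<comment> \<open>residue characteristic not 2\<close>
     1 + 1 \<notin> pD \<nu> \<and>
     \<comment> \<open>D finite-dimensional over k\<close>
     (\<exists>S. finite S \<and> (\<forall>d::'d. \<exists>c. (\<forall>s\<in>S. c s \<in> centre) \<and> d = (\<Sum>s\<in>S. c s * s)))"

definition continuous_involution :: "('d::division_ring \<Rightarrow> ereal) \<Rightarrow> ('d \<Rightarrow> 'd) \<Rightarrow> bool" where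
  "continuous_involution \<nu> \<rho> \<longleftrightarrow>
     (\<forall>x y. \<rho> (x + y) = \<rho> x + \<rho> y) \<and>
     (\<forall>x y. \<rho> (x * y) = \<rho> y * \<rho> x) \<and>
     (\<forall>x. \<rho> (\<rho> x) = x) \<and>
     (\<forall>x. \<forall>M::real. \<exists>N::real. \<forall>y. \<nu> (y - x) \<ge> ereal N \<longrightarrow> \<nu> (\<rho> y - \<rho> x) \<ge> ereal M)"

text \<open>V is the type 'v with a right scalar multiplication sm v a = v a.\<close>

definition lin_comb :: "('v::ab_group_add \<Rightarrow> 'd::division_ring \<Rightarrow> 'v) \<Rightarrow> 'v set \<Rightarrow> ('v \<Rightarrow> 'd) \<Rightarrow> 'v" where
  "lin_comb sm S c = (\<Sum>s\<in>S. sm s (c s))"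

definition d_span :: "('v::ab_group_add \<Rightarrow> 'd::division_ring \<Rightarrow> 'v) \<Rightarrow> 'v set \<Rightarrow> 'v set" where
  "d_span sm S = {lin_comb sm S c | c. True}"

definition right_vs :: "('v::ab_group_add \<Rightarrow> 'd::division_ring \<Rightarrow> 'v) \<Rightarrow> bool" where
  "right_vs sm \<longleftrightarrow>
     (\<forall>x y a. sm (x + y) a = sm x a + sm y a) \<and>
     (\<forall>x a b. sm x (a + b) = sm x a + sm x b) \<and>
     (\<forall>x a b. sm x (a * b) = sm (sm x a) b) \<and>
     (\<forall>x. sm x 1 = x)"

definition fin_dim_right_vs :: "('v::ab_group_add \<Rightarrow> 'd::division_ring \<Rightarrow> 'v) \<Rightarrow> bool" where
  "fin_dim_right_vs sm \<longleftrightarrow> right_vs sm \<and> (\<exists>S. finite S \<and> d_span sm S = UNIV)"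

definition subspace_r :: "('v::ab_group_add \<Rightarrow> 'd::division_ring \<Rightarrow> 'v) \<Rightarrow> 'v set \<Rightarrow> bool" where
  "subspace_r sm X \<longleftrightarrow> 0 \<in> X \<and> (\<forall>x\<in>X. \<forall>y\<in>X. x + y \<in> X) \<and> (\<forall>x\<in>X. \<forall>a. sm x a \<in> X)"

definition right_linear_on :: "('v::ab_group_add \<Rightarrow> 'd::division_ring \<Rightarrow> 'v) \<Rightarrow> 'v set \<Rightarrow> ('v \<Rightarrow> 'v) \<Rightarrow> bool" where
  "right_linear_on sm X f \<longleftrightarrow> (\<forall>x\<in>X. f x \<in> X) \<and>
     (\<forall>x\<in>X. \<forall>y\<in>X. f (x + y) = f x + f y) \<and> (\<forall>x\<in>X. \<forall>a. f (sm x a) = sm (f x) a)"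

definition eps_hermitian ::
  "('v::ab_group_add \<Rightarrow> 'd::division_ring \<Rightarrow> 'v) \<Rightarrow> ('d \<Rightarrow> 'd) \<Rightarrow> 'd \<Rightarrow> ('v \<Rightarrow> 'v \<Rightarrow> 'd) \<Rightarrow> bool" where
  "eps_hermitian sm \<rho> \<epsilon> h \<longleftrightarrow>
     (\<epsilon> = 1 \<or> \<epsilon> = -1) \<and>
     (\<forall>x y z. h (x + y) z = h x z + h y z) \<and>
     (\<forall>x y z. h x (y + z) = h x y + h x z) \<and>
     (\<forall>x y a. h (sm x a) y = \<rho> a * h x y) \<and>
     (\<forall>x y b. h x (sm y b) = h x y * b) \<and>
     (\<forall>x y. h y x = \<epsilon> * \<rho> (h x y))"

definition non_degenerate :: "('v::ab_group_add \<Rightarrow> 'v \<Rightarrow> 'd::division_ring) \<Rightarrow> bool" where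
  "non_degenerate h \<longleftrightarrow> (\<forall>x. (\<forall>y. h x y = 0) \<longrightarrow> x = 0)"

definition isotropic :: "('v::ab_group_add \<Rightarrow> 'v \<Rightarrow> 'd::division_ring) \<Rightarrow> bool" where
  "isotropic h \<longleftrightarrow> (\<exists>v. v \<noteq> 0 \<and> h v v = 0)"

definition totally_isotropic ::
  "('v::ab_group_add \<Rightarrow> 'd::division_ring \<Rightarrow> 'v) \<Rightarrow> ('v \<Rightarrow> 'v \<Rightarrow> 'd) \<Rightarrow> 'v set \<Rightarrow> bool" where
  "totally_isotropic sm h W \<longleftrightarrow> subspace_r sm W \<and> (\<forall>x\<in>W. \<forall>y\<in>W. h x y = 0)"

definition max_totally_isotropic ::
  "('v::ab_group_add \<Rightarrow> 'd::division_ring \<Rightarrow> 'v) \<Rightarrow> ('v \<Rightarrow> 'v \<Rightarrow> 'd) \<Rightarrow> 'v set \<Rightarrow> bool" where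
  "max_totally_isotropic sm h W \<longleftrightarrow> totally_isotropic sm h W \<and>
     (\<forall>U. totally_isotropic sm h U \<longrightarrow> W \<subseteq> U \<longrightarrow> U = W)"

definition direct_sum :: "('v::ab_group_add \<Rightarrow> 'd::division_ring \<Rightarrow> 'v) \<Rightarrow> 'v set \<Rightarrow> 'v set \<Rightarrow> bool" where
  "direct_sum sm W W' \<longleftrightarrow> subspace_r sm W \<and> subspace_r sm W' \<and> W \<inter> W' = {0} \<and>
     (\<forall>v. \<exists>w\<in>W. \<exists>w'\<in>W'. v = w + w')"

definition o_span ::
  "('v::ab_group_add \<Rightarrow> 'd::division_ring \<Rightarrow> 'v) \<Rightarrow> ('d \<Rightarrow> ereal) \<Rightarrow> 'v set \<Rightarrow> 'v set" where
  "o_span sm \<nu> S = {lin_comb sm S c | c. \<forall>s\<in>S. c s \<in> oD \<nu>}"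

definition full_lattice ::
  "('v::ab_group_add \<Rightarrow> 'd::division_ring \<Rightarrow> 'v) \<Rightarrow> ('d \<Rightarrow> ereal) \<Rightarrow> 'v set \<Rightarrow> 'v set \<Rightarrow> bool" where
  "full_lattice sm \<nu> X M \<longleftrightarrow> (\<exists>S. finite S \<and> S \<subseteq> X \<and> M = o_span sm \<nu> S \<and> d_span sm S = X)"

definition lattice_fun ::
  "('v::ab_group_add \<Rightarrow> 'd::division_ring \<Rightarrow> 'v) \<Rightarrow> ('d \<Rightarrow> ereal) \<Rightarrow> 'd \<Rightarrow> 'v set \<Rightarrow> (real \<Rightarrow> 'v set) \<Rightarrow> bool" where
  "lattice_fun sm \<nu> \<pi> X \<Lambda> \<longleftrightarrow>
     (\<forall>r. full_lattice sm \<nu> X (\<Lambda> r)) \<and>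
     (\<forall>r. \<Lambda> (r + real_of_ereal (\<nu> \<pi>)) = (\<lambda>m. sm m \<pi>) ` \<Lambda> r) \<and>
     (\<forall>r s. r \<le> s \<longrightarrow> \<Lambda> s \<subseteq> \<Lambda> r) \<and>
     (\<forall>r. \<Lambda> r = (\<Inter>s\<in>{..<r}. \<Lambda> s))"

text \<open>Duals: M^{#,Y} = {y in Y. h(y,M) in p_D}; for V itself take Y = UNIV.\<close>

definition dual_in ::
  "('d::division_ring \<Rightarrow> ereal) \<Rightarrow> ('v \<Rightarrow> 'v \<Rightarrow> 'd) \<Rightarrow> 'v set \<Rightarrow> 'v set \<Rightarrow> 'v set" where
  "dual_in \<nu> h Y M = {y\<in>Y. \<forall>m\<in>M. h y m \<in> pD \<nu>}"

definition lat_dual ::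
  "('d::division_ring \<Rightarrow> ereal) \<Rightarrow> ('v \<Rightarrow> 'v \<Rightarrow> 'd) \<Rightarrow> 'v set \<Rightarrow> (real \<Rightarrow> 'v set) \<Rightarrow> real \<Rightarrow> 'v set" where
  "lat_dual \<nu> h Y \<Lambda> t = dual_in \<nu> h Y (\<Union>s\<in>{-t<..}. \<Lambda> s)"

definition self_dual_lattice_fun ::
  "('v::ab_group_add \<Rightarrow> 'd::division_ring \<Rightarrow> 'v) \<Rightarrow> ('d \<Rightarrow> ereal) \<Rightarrow> 'd \<Rightarrow> ('v \<Rightarrow> 'v \<Rightarrow> 'd)
     \<Rightarrow> (real \<Rightarrow> 'v set) \<Rightarrow> bool" where
  "self_dual_lattice_fun sm \<nu> \<pi> h \<Lambda> \<longleftrightarrow> lattice_fun sm \<nu> \<pi> UNIV \<Lambda> \<and> lat_dual \<nu> h UNIV \<Lambda> = \<Lambda>"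

definition phi ::
  "('d::division_ring \<Rightarrow> ereal) \<Rightarrow> ('v::ab_group_add \<Rightarrow> 'v \<Rightarrow> 'd) \<Rightarrow> 'v set \<Rightarrow> (real \<Rightarrow> 'v set) \<Rightarrow> real \<Rightarrow> 'v set" where
  "phi \<nu> h W' \<Lambda> t = {w + w' | w w'. w \<in> \<Lambda> t \<and> w' \<in> lat_dual \<nu> h W' \<Lambda> t}"

definition is_basis ::
  "('v::ab_group_add \<Rightarrow> 'd::division_ring \<Rightarrow> 'v) \<Rightarrow> 'v set \<Rightarrow> nat \<Rightarrow> (nat \<Rightarrow> 'v) \<Rightarrow> bool" where
  "is_basis sm X n v \<longleftrightarrow> (\<forall>i<n. v i \<in> X) \<and>
     (\<forall>c. (\<Sum>i<n. sm (v i) (c i)) = 0 \<longrightarrow> (\<forall>i<n. c i = 0)) \<and>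
     (\<forall>x\<in>X. \<exists>c. x = (\<Sum>i<n. sm (v i) (c i)))"

definition splits ::
  "('v::ab_group_add \<Rightarrow> 'd::division_ring \<Rightarrow> 'v) \<Rightarrow> ('d \<Rightarrow> ereal) \<Rightarrow> nat \<Rightarrow> (nat \<Rightarrow> 'v)
     \<Rightarrow> (nat \<Rightarrow> real) \<Rightarrow> (real \<Rightarrow> 'v set) \<Rightarrow> bool" where
  "splits sm \<nu> n v \<alpha> \<Lambda> \<longleftrightarrow>
     (\<forall>x. \<Lambda> x = {(\<Sum>i<n. sm (v i) (\<delta> i)) | \<delta>. \<forall>i<n. \<nu> (\<delta> i) \<ge> ereal (x - \<alpha> i)})"

definition affine_comb ::
  "('v::ab_group_add \<Rightarrow> 'd::division_ring \<Rightarrow> 'v) \<Rightarrow> ('d \<Rightarrow> ereal) \<Rightarrow> 'v set \<Rightarrow> real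
     \<Rightarrow> (real \<Rightarrow> 'v set) \<Rightarrow> (real \<Rightarrow> 'v set) \<Rightarrow> (real \<Rightarrow> 'v set) \<Rightarrow> bool" where
  "affine_comb sm \<nu> X t \<Lambda> \<Lambda>' M \<longleftrightarrow>
     (\<exists>n v \<alpha> \<alpha>'. is_basis sm X n v \<and> splits sm \<nu> n v \<alpha> \<Lambda> \<and> splits sm \<nu> n v \<alpha>' \<Lambda>' \<and>
        splits sm \<nu> n v (\<lambda>i. t * \<alpha> i + (1 - t) * \<alpha>' i) M)"

definition GL_on :: "('v::ab_group_add \<Rightarrow> 'd::division_ring \<Rightarrow> 'v) \<Rightarrow> 'v set \<Rightarrow> ('v \<Rightarrow> 'v) set" where
  "GL_on sm W = {g. right_linear_on sm W g \<and> bij_betw g W W}"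

definition act :: "('v \<Rightarrow> 'v) \<Rightarrow> (real \<Rightarrow> 'v set) \<Rightarrow> real \<Rightarrow> 'v set" where
  "act g \<Lambda> r = g ` \<Lambda> r"

definition adj :: "('v \<Rightarrow> 'v \<Rightarrow> 'd) \<Rightarrow> ('v \<Rightarrow> 'v) \<Rightarrow> ('v \<Rightarrow> 'v)" where
  "adj h a = (THE b. \<forall>x y. h (a x) y = h x (b y))"

definition proj1 :: "'v::ab_group_add set \<Rightarrow> 'v set \<Rightarrow> 'v \<Rightarrow> 'v" where
  "proj1 W W' v = (THE w. w \<in> W \<and> (\<exists>w'\<in>W'. v = w + w'))"

definition proj2 :: "'v::ab_group_add set \<Rightarrow> 'v set \<Rightarrow> 'v \<Rightarrow> 'v" where
  "proj2 W W' v = (THE w'. w' \<in> W' \<and> (\<exists>w\<in>W. v = w + w'))"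

text \<open>a^{sigma,W'} is the restriction to W' of sigma(a (+) 0), where a (+) 0 = a o proj_W.\<close>

definition sigma_W' :: "('v::ab_group_add \<Rightarrow> 'v \<Rightarrow> 'd) \<Rightarrow> 'v set \<Rightarrow> 'v set \<Rightarrow> ('v \<Rightarrow> 'v) \<Rightarrow> ('v \<Rightarrow> 'v)" where
  "sigma_W' h W W' a = adj h (\<lambda>v. a (proj1 W W' v))"

definition i_WW' :: "('v::ab_group_add \<Rightarrow> 'v \<Rightarrow> 'd) \<Rightarrow> 'v set \<Rightarrow> 'v set \<Rightarrow> ('v \<Rightarrow> 'v) \<Rightarrow> ('v \<Rightarrow> 'v)" where
  "i_WW' h W W' g v = g (proj1 W W' v) + inv_into W' (sigma_W' h W W' g) (proj2 W W' v)"

end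

theory Submission
  imports Defs "HOL-Library.Function_Algebras"
begin

text \<open>
  Everything rests on dual bases. Since \<open>W\<close> and \<open>W'\<close> are complementary maximal totally
  isotropic subspaces, \<open>h\<close> pairs them perfectly, so every basis \<open>(b\<^sub>i)\<close> of \<open>W\<close> has a basis
  \<open>(w\<^sub>i)\<close> of \<open>W'\<close> with \<open>h(b\<^sub>i, w\<^sub>j) = \<delta>\<^sub>i\<^sub>j\<close>. If \<open>\<Lambda>(-t) = \<Oplus> b\<^sub>i o\<^sub>D\<close>, then \<open>\<Lambda>\<^sup>#\<^sup>,\<^sup>W\<^sup>'(t)\<close> is an
  \<open>o\<^sub>D\<close>-module squeezed between \<open>\<Oplus> w\<^sub>i p\<^sub>D\<close> and \<open>\<Oplus> w\<^sub>i \<pi>\<^sup>-\<^sup>1o\<^sub>D\<close>, hence a lattice (a discrete form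
  of the Hermite normal form), and the remaining lattice function axioms are transported from \<open>\<Lambda>\<close>.
  Because both summands are totally isotropic, \<open>h(a + y, a' + y') = h(a, y') + h(y, a')\<close>, so the
  dual of \<open>\<phi>(\<Lambda>)(t)\<close> splits into the bidual of \<open>\<Lambda>\<close>, which is \<open>\<Lambda>(t)\<close> by left continuity, plus
  \<open>\<Lambda>\<^sup>#\<^sup>,\<^sup>W\<^sup>'(t)\<close>. A basis \<open>(v\<^sub>i)\<close> splitting \<open>\<Lambda>\<close> with exponents \<open>\<alpha>\<^sub>i\<close> is completed by its dual
  basis of \<open>W'\<close>, which splits \<open>\<Lambda>\<^sup>#\<^sup>,\<^sup>W\<^sup>'\<close> with exponents \<open>-\<alpha>\<^sub>i\<close>; this makes \<open>\<phi>\<close> affine.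
  Finally the \<open>W'\<close>-component of \<open>i\<^sub>W\<^sub>,\<^sub>W\<^sub>'(g)\<close> is the inverse of the adjoint \<open>g\<^sup>\<sigma>\<^sup>,\<^sup>W\<^sup>'\<close>,
  which carries \<open>\<Lambda>\<^sup>#\<^sup>,\<^sup>W\<^sup>'\<close> onto \<open>(g\<Lambda>)\<^sup>#\<^sup>,\<^sup>W\<^sup>'\<close>.
\<close>

section \<open>Finite families in right vector spaces\<close>

definition lcomb :: "('v::ab_group_add \<Rightarrow> 'd::division_ring \<Rightarrow> 'v) \<Rightarrow> nat \<Rightarrow> (nat \<Rightarrow> 'v) \<Rightarrow> (nat \<Rightarrow> 'd) \<Rightarrow> 'v" where
  "lcomb sm n u c = (\<Sum>i<n. sm (u i) (c i))"

definition lin_indep :: "('v::ab_group_add \<Rightarrow> 'd::division_ring \<Rightarrow> 'v) \<Rightarrow> nat \<Rightarrow> (nat \<Rightarrow> 'v) \<Rightarrow> bool" where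
  "lin_indep sm n u \<longleftrightarrow> (\<forall>c. lcomb sm n u c = 0 \<longrightarrow> (\<forall>i<n. c i = 0))"

definition span_fam :: "('v::ab_group_add \<Rightarrow> 'd::division_ring \<Rightarrow> 'v) \<Rightarrow> nat \<Rightarrow> (nat \<Rightarrow> 'v) \<Rightarrow> 'v set" where
  "span_fam sm n u = range (lcomb sm n u)"

locale right_vector_space =
  fixes sm :: "'v::ab_group_add \<Rightarrow> 'd::division_ring \<Rightarrow> 'v"
  assumes rv: "right_vs sm"
begin

lemma sm_addL: "sm (x + y) a = sm x a + sm y a" using rv unfolding right_vs_def by blast

lemma sm_addR: "sm x (a + b) = sm x a + sm x b" using rv unfolding right_vs_def by blast

lemma sm_mult: "sm x (a * b) = sm (sm x a) b" using rv unfolding right_vs_def by blast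

lemma sm_one[simp]: "sm x 1 = x" using rv unfolding right_vs_def by blast

lemma sm_zeroR[simp]: "sm x 0 = 0"
  using sm_addR[of x 0 0] by simp

lemma sm_zeroL[simp]: "sm 0 a = 0"
  using sm_addL[of 0 0 a] by simp

lemma sm_minusR: "sm x (- a) = - sm x a"
  using minus_unique[of "sm x a" "sm x (-a)"] sm_addR[of x a "-a"] by simp

lemma sm_minusL: "sm (- x) a = - sm x a"
  using minus_unique[of "sm x a" "sm (-x) a"] sm_addL[of x "-x" a] by simp

lemma sm_diffL: "sm (x - y) a = sm x a - sm y a"
  using sm_addL[of x "-y" a] sm_minusL by simp

lemma sm_diffR: "sm x (a - b) = sm x a - sm x b"
  using sm_addR[of x a "-b"] sm_minusR by simp

lemma sm_sumL: "sm (\<Sum>i\<in>A. f i) a = (\<Sum>i\<in>A. sm (f i) a)"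
  by (induction A rule: infinite_finite_induct) (auto simp: sm_addL)

lemma sm_sumR: "sm x (\<Sum>i\<in>A. f i) = (\<Sum>i\<in>A. sm x (f i))"
  by (induction A rule: infinite_finite_induct) (auto simp: sm_addR)

lemma sm_inv: "a \<noteq> 0 \<Longrightarrow> sm (sm x a) (inverse a) = x"
  by (simp flip: sm_mult)

lemma lcomb_add: "lcomb sm n u c + lcomb sm n u d = lcomb sm n u (\<lambda>i. c i + d i)"
  by (simp add: lcomb_def sm_addR sum.distrib)

lemma lcomb_diff: "lcomb sm n u c - lcomb sm n u d = lcomb sm n u (\<lambda>i. c i - d i)"
  by (simp add: lcomb_def sm_diffR sum_subtractf)

lemma lcomb_sm: "sm (lcomb sm n u c) a = lcomb sm n u (\<lambda>i. c i * a)"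
  by (simp add: lcomb_def sm_sumL sm_mult)

lemma lcomb_Suc: "lcomb sm (Suc n) u c = lcomb sm n u c + sm (u n) (c n)"
  by (simp add: lcomb_def)

lemma lcomb_0[simp]: "lcomb sm 0 u c = 0"
  by (simp add: lcomb_def)

lemma lcomb_cong: "(\<And>i. i < n \<Longrightarrow> sm (u i) (c i) = sm (u' i) (c' i)) \<Longrightarrow> lcomb sm n u c = lcomb sm n u' c'"
  unfolding lcomb_def by (rule sum.cong) auto

lemma lcomb_zero: "lcomb sm n u (\<lambda>i. 0) = 0"
  by (simp add: lcomb_def)

lemma lcomb_unit: "i < n \<Longrightarrow> lcomb sm n u (\<lambda>j. if j = i then a else 0) = sm (u i) a"
proof -
  assume "i < n"
  have "lcomb sm n u (\<lambda>j. if j = i then a else 0) = (\<Sum>j<n. if j = i then sm (u i) a else 0)"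
    unfolding lcomb_def by (rule sum.cong) auto
  also have "\<dots> = sm (u i) a" using \<open>i < n\<close> by (simp add: sum.delta)
  finally show ?thesis .
qed

lemma lcomb_upd_coeff: "lcomb sm k u (c(k := a)) = lcomb sm k u c"
  by (rule lcomb_cong) auto

lemma lcomb_upd_family: "lcomb sm k (u(k := a)) c = lcomb sm k u c"
  by (rule lcomb_cong) auto

lemma lcomb_Suc_last_zero: "c k = 0 \<Longrightarrow> lcomb sm (Suc k) u c = lcomb sm k u c"
  by (simp add: lcomb_Suc)

lemma sum_lcomb: "(\<Sum>j<(N::nat). lcomb sm n u (g j)) = lcomb sm n u (\<lambda>i. \<Sum>j<N. g j i)"
proof (induction N)
  case 0 then show ?case by (simp add: lcomb_zero)
next
  case (Suc N) then show ?case by (simp add: lcomb_add)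
qed

lemma lcomb_split: "lcomb sm (n + m) u c = lcomb sm n u c + lcomb sm m (\<lambda>i. u (n + i)) (\<lambda>i. c (n + i))"
  by (induction m) (simp_all add: lcomb_Suc)

lemma lin_lcomb:
  assumes "\<And>x y. f (x + y) = f x + f y" "\<And>x a. f (sm x a) = sm (f x) a"
  shows "f (lcomb sm n u c) = lcomb sm n (f \<circ> u) c"
proof (induction n)
  case 0
  have "f 0 = 0" using assms(1)[of 0 0] by simp
  then show ?case by simp
next
  case (Suc n) then show ?case by (simp add: lcomb_Suc assms)
qed

lemma span_fam_zero[simp]: "0 \<in> span_fam sm n u"
  unfolding span_fam_def using lcomb_zero by (metis rangeI)

lemma span_fam_add: "x \<in> span_fam sm n u \<Longrightarrow> y \<in> span_fam sm n u \<Longrightarrow> x + y \<in> span_fam sm n u"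
proof -
  assume "x \<in> span_fam sm n u" "y \<in> span_fam sm n u"
  then obtain c d where "x = lcomb sm n u c" "y = lcomb sm n u d" unfolding span_fam_def by blast
  then have "x + y = lcomb sm n u (\<lambda>i. c i + d i)" using lcomb_add by simp
  then show ?thesis unfolding span_fam_def by blast
qed

lemma span_fam_sm: "x \<in> span_fam sm n u \<Longrightarrow> sm x a \<in> span_fam sm n u"
  unfolding span_fam_def by (auto simp: lcomb_sm)

lemma span_fam_generator: "i < n \<Longrightarrow> u i \<in> span_fam sm n u"
  unfolding span_fam_def using lcomb_unit[of i n u 1] by (metis rangeI sm_one)

lemma subspace_lcomb:
  assumes "subspace_r sm X" "\<And>i. i < n \<Longrightarrow> u i \<in> X"
  shows "lcomb sm n u c \<in> X"
  using assms(2)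
proof (induction n)
  case 0 then show ?case using assms(1) by (simp add: subspace_r_def)
next
  case (Suc n) then show ?case using assms(1) unfolding subspace_r_def by (simp add: lcomb_Suc)
qed

lemma subspace_span_fam: "subspace_r sm (span_fam sm n u)"
  unfolding subspace_r_def using span_fam_add span_fam_sm by auto

lemma span_fam_mono: "(\<And>i. i < n \<Longrightarrow> u i \<in> span_fam sm m x) \<Longrightarrow> span_fam sm n u \<subseteq> span_fam sm m x"
  unfolding span_fam_def[of sm n u] using subspace_lcomb[OF subspace_span_fam] by blast

lemma lcomb_reindex:
  assumes "bij_betw p {..<k} {..<k}"
  shows "lcomb sm k (u \<circ> p) c = lcomb sm k u (\<lambda>j. c (inv_into {..<k} p j))"
proof -
  have "lcomb sm k u (\<lambda>j. c (inv_into {..<k} p j)) = (\<Sum>i<k. sm (u (p i)) (c (inv_into {..<k} p (p i))))"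
    unfolding lcomb_def using sum.reindex_bij_betw[OF assms, symmetric, of "\<lambda>j. sm (u j) (c (inv_into {..<k} p j))"]
    by simp
  also have "\<dots> = lcomb sm k (u \<circ> p) c"
    unfolding lcomb_def by (rule sum.cong) (use assms bij_betw_inv_into_left in fastforce)+
  finally show ?thesis by simp
qed

lemma lin_indep_perm:
  assumes "lin_indep sm k u" "bij_betw p {..<k} {..<k}"
  shows "lin_indep sm k (u \<circ> p)"
  unfolding lin_indep_def
proof (intro allI impI)
  fix c i assume c: "lcomb sm k (u \<circ> p) c = 0" and i: "i < k"
  let ?q = "inv_into {..<k} p"
  have "\<forall>j<k. c (?q j) = 0" using c assms(1) unfolding lcomb_reindex[OF assms(2)] lin_indep_def by blast
  moreover have "p i < k" "?q (p i) = i" using assms(2) i bij_betwE bij_betw_inv_into_left by fastforce+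
  ultimately show "c i = 0" by metis
qed

lemma lin_indep_nonzero: "lin_indep sm k u \<Longrightarrow> i < k \<Longrightarrow> u i \<noteq> 0"
  unfolding lin_indep_def using lcomb_unit[of i k u 1] by force

lemma lin_indep_SucD: "lin_indep sm (Suc k) u \<Longrightarrow> lin_indep sm k u"
  unfolding lin_indep_def
proof (intro allI impI)
  fix c i assume H: "\<forall>c. lcomb sm (Suc k) u c = 0 \<longrightarrow> (\<forall>i<Suc k. c i = 0)" "lcomb sm k u c = 0" "i < k"
  have "lcomb sm (Suc k) u (c(k := 0)) = 0"
    using H(2) by (simp add: lcomb_Suc cong: lcomb_cong)
  then show "c i = 0" using H(1) H(3) by (metis fun_upd_apply less_Suc_eq nat_neq_iff)
qed

lemma lcomb_unique: "lin_indep sm n u \<Longrightarrow> lcomb sm n u c = lcomb sm n u d \<Longrightarrow> i < n \<Longrightarrow> c i = d i"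
  using lcomb_diff[of n u c d] unfolding lin_indep_def by fastforce

lemma lin_indep_inj: "lin_indep sm n b \<Longrightarrow> inj_on b {..<n}"
proof (rule inj_onI)
  fix i j assume ind: "lin_indep sm n b" and ij: "i \<in> {..<n}" "j \<in> {..<n}" "b i = b j"
  show "i = j"
  proof (rule ccontr)
    assume "i \<noteq> j"
    define c where "c = (\<lambda>k. if k = i then (1::'d) else if k = j then -1 else 0)"
    have "lcomb sm n b c = (\<Sum>k<n. (if k = i then b i else 0) + (if k = j then - b j else 0))"
      unfolding lcomb_def c_def by (rule sum.cong) (use \<open>i \<noteq> j\<close> in \<open>auto simp: sm_minusR\<close>)
    also have "\<dots> = 0" using ij by (simp add: sum.distrib sum.delta)
    finally have "lcomb sm n b c = 0" .
    moreover have "i < n" using ij(1) by simp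
    ultimately have "c i = 0" using ind unfolding lin_indep_def by blast
    then show False unfolding c_def by simp
  qed
qed

lemma lin_indep_eliminate_last_coord:
  assumes v: "lin_indep sm (Suc k) v" and vb: "\<And>i. i < Suc k \<Longrightarrow> v i = lcomb sm (Suc m) x (b i)"
    and bk: "b k m \<noteq> 0"
  shows "\<exists>w. lin_indep sm k w \<and> (\<forall>j<k. w j \<in> span_fam sm m x)"
proof -
  define pivot where "pivot = inverse (b k m)"
  define w where "w = (\<lambda>j. v j - sm (v k) (pivot * b j m))"
  have "\<forall>j<k. w j \<in> span_fam sm m x"
  proof (intro allI impI)
    fix j assume j: "j < k"
    have "w j = lcomb sm (Suc m) x (b j) - lcomb sm (Suc m) x (\<lambda>l. b k l * (pivot * b j m))"
      unfolding w_def using vb j by (simp add: lcomb_sm)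
    also have "\<dots> = lcomb sm (Suc m) x (\<lambda>l. b j l - b k l * (pivot * b j m))"
      by (simp add: lcomb_diff)
    also have "\<dots> = lcomb sm m x (\<lambda>l. b j l - b k l * (pivot * b j m))"
      using bk by (simp add: lcomb_Suc pivot_def mult.assoc[symmetric])
    finally show "w j \<in> span_fam sm m x" by (simp add: span_fam_def)
  qed
  moreover have "lin_indep sm k w"
    unfolding lin_indep_def
  proof (intro allI impI)
    fix c i assume c: "lcomb sm k w c = 0" and i: "i < k"
    define c' where "c' = c(k := - (\<Sum>j<k. pivot * b j m * c j))"
    have "lcomb sm k w c = lcomb sm k v c - (\<Sum>j<k. sm (v k) (pivot * b j m * c j))"
      unfolding lcomb_def w_def by (simp add: sm_diffL sum_subtractf sm_mult)
    also have "\<dots> = lcomb sm (Suc k) v c'"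
      unfolding lcomb_Suc c'_def by (simp add: sm_minusR sm_sumR cong: lcomb_cong)
    finally have "lcomb sm (Suc k) v c' = 0" using c by simp
    then have "c' i = 0" using v i unfolding lin_indep_def by auto
    then show "c i = 0" using i unfolding c'_def by simp
  qed
  ultimately show ?thesis by blast
qed

lemma steinitz:
  "lin_indep sm k u \<Longrightarrow> (\<forall>i<k. u i \<in> span_fam sm m x) \<Longrightarrow> k \<le> m"
proof (induction m arbitrary: k u)
  case 0
  show ?case
  proof (rule ccontr)
    assume "\<not> k \<le> 0"
    then have "u 0 \<in> span_fam sm 0 x" using 0 by auto
    then have "u 0 = 0" by (simp add: span_fam_def)
    then show False using lin_indep_nonzero[OF 0(1)] \<open>\<not> k \<le> 0\<close> by auto
  qed
next
  case (Suc m)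
  define a where "a = (\<lambda>i. SOME c. u i = lcomb sm (Suc m) x c)"
  have a: "\<And>i. i < k \<Longrightarrow> u i = lcomb sm (Suc m) x (a i)"
  proof -
    fix i assume "i < k"
    then have "\<exists>c. u i = lcomb sm (Suc m) x c" using Suc(3) unfolding span_fam_def by blast
    then show "u i = lcomb sm (Suc m) x (a i)" unfolding a_def by (rule someI_ex)
  qed
  show ?case
  proof (cases "\<forall>i<k. a i m = 0")
    case True
    have "\<forall>i<k. u i \<in> span_fam sm m x"
    proof (intro allI impI)
      fix i assume "i < k"
      then have "u i = lcomb sm m x (a i)" using a True by (simp add: lcomb_Suc)
      then show "u i \<in> span_fam sm m x" by (simp add: span_fam_def)
    qed
    then show ?thesis using Suc.IH[OF Suc(2)] by simp
  next
    case False
    then obtain i0 where i0: "i0 < k" "a i0 m \<noteq> 0" by blast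
    then obtain k' where k': "k = Suc k'" by (cases k) auto
    define p where "p = (\<lambda>i::nat. if i = i0 then k' else if i = k' then i0 else i)"
    have pk: "\<And>i. i < k \<Longrightarrow> p i < k" unfolding p_def using i0 k' by auto
    have pp: "\<And>i. p (p i) = i" unfolding p_def by auto
    have "bij_betw p {..<k} {..<k}"
      by (rule bij_betw_byWitness[of _ p]) (use pk pp in auto)
    then have "lin_indep sm k (u \<circ> p)" by (rule lin_indep_perm[OF Suc(2)])
    moreover have "\<And>i. i < Suc k' \<Longrightarrow> (u \<circ> p) i = lcomb sm (Suc m) x ((a \<circ> p) i)"
      using a pk k' by simp
    moreover have "(a \<circ> p) k' m \<noteq> 0" unfolding p_def using i0 by simp
    ultimately obtain w where "lin_indep sm k' w" "\<forall>j<k'. w j \<in> span_fam sm m x"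
      using lin_indep_eliminate_last_coord[of k' "u \<circ> p" m x "a \<circ> p"] unfolding k' by blast
    then have "k' \<le> m" using Suc.IH by blast
    then show ?thesis using k' by simp
  qed
qed

lemma lin_indep_snoc:
  assumes "lin_indep sm n u" "y \<notin> span_fam sm n u"
  shows "lin_indep sm (Suc n) (u(n := y))"
  unfolding lin_indep_def
proof (intro allI impI)
  fix c i assume c: "lcomb sm (Suc n) (u(n := y)) c = 0" and i: "i < Suc n"
  have c2: "lcomb sm n u c + sm y (c n) = 0"
    using c by (simp add: lcomb_Suc cong: lcomb_cong)
  have cn: "c n = 0"
  proof (rule ccontr)
    assume "c n \<noteq> 0"
    have "sm y (c n) = - lcomb sm n u c" using c2 by (simp add: eq_neg_iff_add_eq_0 add.commute)
    then have "y = sm (- lcomb sm n u c) (inverse (c n))" using sm_inv[OF \<open>c n \<noteq> 0\<close>, of y] by simp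
    moreover have "- lcomb sm n u c \<in> span_fam sm n u"
    proof -
      have "- lcomb sm n u c = lcomb sm n u (\<lambda>i. 0 - c i)"
        using lcomb_diff[of n u "\<lambda>i. 0" c] lcomb_zero by simp
      then show ?thesis unfolding span_fam_def by blast
    qed
    ultimately have "y \<in> span_fam sm n u" using span_fam_sm by simp
    then show False using assms(2) by simp
  qed
  then have "lcomb sm n u c = 0" using c2 by simp
  then show "c i = 0" using assms(1) i cn unfolding lin_indep_def by (metis less_Suc_eq)
qed

lemma lin_comb_as_lcomb:
  assumes "bij_betw f {..<N} S"
  shows "lin_comb sm S c = lcomb sm N f (c \<circ> f)"
  unfolding lin_comb_def lcomb_def using sum.reindex_bij_betw[OF assms, of "\<lambda>s. sm s (c s)"] by simp

lemma d_span_eq_span_fam: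
  assumes "bij_betw f {..<N} S"
  shows "d_span sm S = span_fam sm N f"
proof
  show "d_span sm S \<subseteq> span_fam sm N f"
    unfolding d_span_def span_fam_def using lin_comb_as_lcomb[OF assms] by auto
next
  show "span_fam sm N f \<subseteq> d_span sm S"
  proof
    fix x assume "x \<in> span_fam sm N f"
    then obtain d where x: "x = lcomb sm N f d" by (auto simp: span_fam_def)
    define c where "c = (\<lambda>s. d (inv_into {..<N} f s))"
    have "lcomb sm N f (c \<circ> f) = lcomb sm N f d"
      by (rule lcomb_cong) (simp add: c_def bij_betw_inv_into_left[OF assms])
    then have "x = lin_comb sm S c" using x lin_comb_as_lcomb[OF assms, of c] by simp
    then show "x \<in> d_span sm S" unfolding d_span_def by blast
  qed
qed

lemma is_basis_iff: "is_basis sm X n v \<longleftrightarrow> (\<forall>i<n. v i \<in> X) \<and> lin_indep sm n v \<and> X \<subseteq> span_fam sm n v"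
proof -
  have "(\<forall>x\<in>X. \<exists>c. x = (\<Sum>i<n. sm (v i) (c i))) \<longleftrightarrow> X \<subseteq> span_fam sm n v"
    unfolding span_fam_def lcomb_def by (auto simp: subset_iff image_iff)
  moreover have "(\<forall>c. (\<Sum>i<n. sm (v i) (c i)) = 0 \<longrightarrow> (\<forall>i<n. c i = 0)) \<longleftrightarrow> lin_indep sm n v"
    unfolding lin_indep_def lcomb_def by (rule refl)
  ultimately show ?thesis unfolding is_basis_def by (simp only:)
qed

lemma exists_basis_of_span:
  assumes X: "subspace_r sm X" and S: "X \<subseteq> span_fam sm N f"
  shows "\<exists>n v. is_basis sm X n v"
proof -
  define P where "P = (\<lambda>k. \<exists>u. lin_indep sm k u \<and> (\<forall>i<k. u i \<in> X))"
  have P0: "P 0" unfolding P_def lin_indep_def by auto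
  have Pb: "\<And>k. P k \<Longrightarrow> k \<le> N" unfolding P_def using steinitz S by blast
  obtain k where k: "P k" "\<And>k'. P k' \<Longrightarrow> k' \<le> k"
    using Nat.ex_has_greatest_nat[where P=P and k=0 and b=N] P0 Pb by auto
  then obtain u where u: "lin_indep sm k u" "\<forall>i<k. u i \<in> X" unfolding P_def by blast
  have "X \<subseteq> span_fam sm k u"
  proof
    fix x assume x: "x \<in> X"
    show "x \<in> span_fam sm k u"
    proof (rule ccontr)
      assume "x \<notin> span_fam sm k u"
      then have "lin_indep sm (Suc k) (u(k := x))" by (rule lin_indep_snoc[OF u(1)])
      moreover have "\<forall>i<Suc k. (u(k := x)) i \<in> X" using u(2) x by (simp add: less_Suc_eq)
      ultimately have "P (Suc k)" unfolding P_def by blast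
      then show False using k(2) by force
    qed
  qed
  then show ?thesis using u is_basis_iff by blast
qed

end

text \<open>The coordinate space \<open>D\<^sup>n\<close> is modelled by functions \<open>nat \<Rightarrow> D\<close> with the pointwise
  group structure, supported on \<open>{..<n}\<close>.\<close>

definition coord_smult :: "(nat \<Rightarrow> 'd::division_ring) \<Rightarrow> 'd \<Rightarrow> (nat \<Rightarrow> 'd)" where
  "coord_smult f a = (\<lambda>i. f i * a)"

lemma right_vector_space_coord_smult: "right_vector_space coord_smult"
  unfolding right_vector_space_def right_vs_def coord_smult_def by (auto simp: fun_eq_iff ring_distribs mult.assoc)

lemma sum_apply: "(\<Sum>k\<in>A. g k) i = (\<Sum>k\<in>A. g k i)" for g :: "nat \<Rightarrow> nat \<Rightarrow> 'a::ab_group_add"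
  by (induction A rule: infinite_finite_induct) auto

lemma lcomb_coord_smult: "lcomb coord_smult n g c i = (\<Sum>k<n. g k i * c k)"
  unfolding lcomb_def coord_smult_def by (simp add: sum_apply)

lemma abs_le_double_sum:
  fixes F :: "nat \<Rightarrow> nat \<Rightarrow> real"
  assumes "j < N" "i < n"
  shows "\<bar>F j i\<bar> \<le> (\<Sum>j<N. \<Sum>i<n. \<bar>F j i\<bar>)"
proof -
  have "\<bar>F j i\<bar> \<le> (\<Sum>i<n. \<bar>F j i\<bar>)" using assms(2) by (intro member_le_sum) auto
  also have "\<dots> \<le> (\<Sum>j<N. \<Sum>i<n. \<bar>F j i\<bar>)" using assms(1) by (intro member_le_sum) (auto intro: sum_nonneg)
  finally show ?thesis .
qed

section \<open>The valuation and the involution\<close>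

locale valued_involution =
  fixes \<nu> :: "'d::division_ring \<Rightarrow> ereal" and \<pi> :: 'd and \<rho> :: "'d \<Rightarrow> 'd"
  assumes LS: "local_setting \<nu> \<pi>" and CI: "continuous_involution \<nu> \<rho>"
begin

lemma discrete_valuation_nu: "discrete_valuation \<nu>" using LS unfolding local_setting_def by blast

lemma uniformizer_pi: "uniformizer \<nu> \<pi>" using LS unfolding local_setting_def by blast

lemma nu_inf_iff: "\<nu> x = \<infinity> \<longleftrightarrow> x = 0" using discrete_valuation_nu unfolding discrete_valuation_def by blast

lemma nu_not_minf: "\<nu> x \<noteq> -\<infinity>" using discrete_valuation_nu unfolding discrete_valuation_def by blast

lemma nu_mult: "\<nu> (x * y) = \<nu> x + \<nu> y" using discrete_valuation_nu unfolding discrete_valuation_def by blast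

lemma nu_add: "\<nu> (x + y) \<ge> min (\<nu> x) (\<nu> y)" using discrete_valuation_nu unfolding discrete_valuation_def by blast

lemma nu_0[simp]: "\<nu> 0 = \<infinity>" using nu_inf_iff by simp

text \<open>The real-valued valuation; note the junk value \<open>vr 0 = 0\<close>.\<close>

definition vr :: "'d \<Rightarrow> real" where "vr x = real_of_ereal (\<nu> x)"

lemma nu_vr: "x \<noteq> 0 \<Longrightarrow> \<nu> x = ereal (vr x)"
  unfolding vr_def using nu_inf_iff nu_not_minf by (cases "\<nu> x") auto

lemma vr_mult: "x \<noteq> 0 \<Longrightarrow> y \<noteq> 0 \<Longrightarrow> vr (x * y) = vr x + vr y"
  using nu_mult[of x y] nu_vr[of x] nu_vr[of y] nu_vr[of "x*y"] by simp

lemma vr_1[simp]: "vr 1 = 0"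
  using vr_mult[of 1 1] by simp

lemma nu_1[simp]: "\<nu> 1 = 0" using nu_vr[of 1] by (simp add: zero_ereal_def)

lemma vr_inverse: "x \<noteq> 0 \<Longrightarrow> vr (inverse x) = - vr x"
  using vr_mult[of x "inverse x"] by simp

lemma vr_m1[simp]: "vr (-1) = 0"
  using vr_mult[of "-1" "-1"] by simp

lemma vr_minus: "x \<noteq> 0 \<Longrightarrow> vr (- x) = vr x"
  using vr_mult[of "-1" x] by simp

lemma nu_minus[simp]: "\<nu> (- x) = \<nu> x"
  by (cases "x = 0") (auto simp: nu_vr vr_minus)

lemma vr_power: "x \<noteq> 0 \<Longrightarrow> vr (x ^ k) = real k * vr x"
  by (induction k) (auto simp: vr_mult algebra_simps)

definition val_pi :: real where "val_pi = real_of_ereal (\<nu> \<pi>)"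

lemma pi_nz: "\<pi> \<noteq> 0" using uniformizer_pi unfolding uniformizer_def by auto

lemma nu_pi: "\<nu> \<pi> = ereal val_pi" using nu_vr[OF pi_nz] by (simp add: val_pi_def vr_def)

lemma vr_pi: "vr \<pi> = val_pi" by (simp add: vr_def val_pi_def)

lemma val_pi_pos: "val_pi > 0" using uniformizer_pi nu_pi unfolding uniformizer_def by simp

lemma val_pi_le: "x \<noteq> 0 \<Longrightarrow> vr x > 0 \<Longrightarrow> val_pi \<le> vr x"
proof -
  assume x: "x \<noteq> 0" "vr x > 0"
  have "0 < \<nu> x" using nu_vr[OF x(1)] x(2) by (simp add: zero_ereal_def)
  then have "\<nu> \<pi> \<le> \<nu> x" using uniformizer_pi unfolding uniformizer_def by blast
  then show ?thesis using nu_vr[OF x(1)] nu_pi by simp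
qed

lemma vr_multiple_of_val_pi: "x \<noteq> 0 \<Longrightarrow> \<exists>n::int. vr x = of_int n * val_pi"
proof -
  assume x: "x \<noteq> 0"
  obtain c :: real where c: "c > 0" "\<nu> ` (UNIV - {0}) = {ereal (of_int n * c) | n. True}"
    using discrete_valuation_nu unfolding discrete_valuation_def by blast
  have "ereal (of_int 1 * c) \<in> \<nu> ` (UNIV - {0})" using c by blast
  then obtain y where "y \<in> UNIV - {0}" and "ereal (of_int 1 * c) = \<nu> y" by (rule imageE)
  then have y: "y \<noteq> 0" "\<nu> y = ereal c" by auto
  then have "vr y = c" using nu_vr by simp
  then have ec: "val_pi \<le> c" using val_pi_le y c by auto
  have "\<nu> \<pi> \<in> \<nu> ` (UNIV - {0})" using pi_nz by auto
  then obtain n0 :: int where n0: "val_pi = of_int n0 * c" using c nu_pi by auto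
  have "n0 > 0" using n0 val_pi_pos c by (simp add: zero_less_mult_iff)
  then have "n0 = 1" using n0 ec c
    by (smt (verit, ccfv_threshold) int_le_real_less mult_le_cancel_right2 of_int_1)
  then have ce: "c = val_pi" using n0 by simp
  have "\<nu> x \<in> \<nu> ` (UNIV - {0})" using x by auto
  then obtain n :: int where "\<nu> x = ereal (of_int n * c)" using c by auto
  then show ?thesis using nu_vr[OF x] ce by auto
qed

lemma vr_neg_le: "x \<noteq> 0 \<Longrightarrow> vr x < 0 \<Longrightarrow> vr x \<le> - val_pi"
proof -
  assume x: "x \<noteq> 0" "vr x < 0"
  obtain n :: int where n: "vr x = of_int n * val_pi" using vr_multiple_of_val_pi[OF x(1)] by blast
  then have "n < 0" using x val_pi_pos by (simp add: mult_less_0_iff)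
  then have "of_int n \<le> (-1::real)" by simp
  then show ?thesis using mult_right_mono[of "real_of_int n" "-1" val_pi] val_pi_pos n by simp
qed

lemma rho_add: "\<rho> (x + y) = \<rho> x + \<rho> y" using CI unfolding continuous_involution_def by blast

lemma rho_mult: "\<rho> (x * y) = \<rho> y * \<rho> x" using CI unfolding continuous_involution_def by blast

lemma rho_rho[simp]: "\<rho> (\<rho> x) = x" using CI unfolding continuous_involution_def by blast

lemma rho_cont: "\<exists>N::real. \<forall>y. \<nu> (y - x) \<ge> ereal N \<longrightarrow> \<nu> (\<rho> y - \<rho> x) \<ge> ereal M"
  using CI unfolding continuous_involution_def by blast

lemma rho_0[simp]: "\<rho> 0 = 0" using rho_add[of 0 0] by simp

lemma rho_minus: "\<rho> (- x) = - \<rho> x"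
  using rho_add[of x "-x"] by (simp add: eq_neg_iff_add_eq_0 add.commute)

lemma rho_1[simp]: "\<rho> 1 = 1"
  using rho_mult[of 1 "\<rho> 1"] by simp

lemma rho_m1[simp]: "\<rho> (-1) = -1" by (simp add: rho_minus)

lemma rho_eq0[simp]: "\<rho> x = 0 \<longleftrightarrow> x = 0"
  by (metis rho_0 rho_rho)

lemma rho_inverse: "\<rho> (inverse x) = inverse (\<rho> x)"
proof (cases "x = 0")
  case False
  have "\<rho> (inverse x) * \<rho> x = 1" using rho_mult[of x "inverse x"] False by simp
  then show ?thesis by (metis False inverse_unique mult.right_neutral rho_eq0
        right_inverse mult.assoc)
qed simp

lemma rho_power: "\<rho> (x ^ k) = \<rho> x ^ k"
  by (induction k) (auto simp: rho_mult power_commutes)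

text \<open>Continuity of \<open>\<rho>\<close> at \<open>0\<close> is what ties \<open>\<rho>\<close> to the valuation: a high power of an element of
  \<open>p\<^sub>D\<close> is close to \<open>0\<close>, hence so is its image. Comparing \<open>\<rho>(\<pi>)\<close> with powers of \<open>\<pi>\<close> then gives
  \<open>\<nu> \<circ> \<rho> = \<nu>\<close>.\<close>

lemma rho_vr_pos: assumes "x \<noteq> 0" "vr x > 0" shows "vr (\<rho> x) > 0"
proof -
  obtain N :: real where N: "\<forall>y. \<nu> (y - 0) \<ge> ereal N \<longrightarrow> \<nu> (\<rho> y - \<rho> 0) \<ge> ereal 1"
    using rho_cont[of 0 1] by blast
  obtain k :: nat where k: "real k * vr x \<ge> N" "k \<ge> 1"
  proof -
    obtain k0 :: nat where "N / vr x \<le> real k0" using real_arch_simple by blast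
    then have "real (Suc k0) * vr x \<ge> N" using assms(2)
      by (smt (verit, ccfv_SIG) divide_le_eq mult_right_mono of_nat_Suc)
    then show ?thesis using that[of "Suc k0"] by simp
  qed
  have "\<nu> (x ^ k) = ereal (real k * vr x)"
    using nu_vr[of "x^k"] vr_power[OF assms(1)] assms(1) by simp
  then have "\<nu> (\<rho> (x ^ k)) \<ge> ereal 1" using N k by simp
  then have "ereal (real k * vr (\<rho> x)) \<ge> 1"
    using nu_vr[of "\<rho> x ^ k"] vr_power[of "\<rho> x" k] assms(1) by (simp add: rho_power)
  then have "real k * vr (\<rho> x) \<ge> 1" by simp
  then show ?thesis using k(2) by (smt (verit) mult_nonneg_nonpos of_nat_0_le_iff)
qed

lemma rho_vr_zero: assumes "x \<noteq> 0" "vr x = 0" shows "vr (\<rho> x) = 0"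
proof (rule ccontr)
  assume H: "vr (\<rho> x) \<noteq> 0"
  have rx: "\<rho> x \<noteq> 0" using assms by simp
  show False
  proof (cases "vr (\<rho> x) > 0")
    case True
    then have "vr (\<rho> (\<rho> x)) > 0" using rho_vr_pos rx by blast
    then show False using assms by simp
  next
    case False
    then have "vr (inverse (\<rho> x)) > 0" using H vr_inverse[OF rx] by simp
    then have "vr (\<rho> (inverse (\<rho> x))) > 0" using rho_vr_pos rx by simp
    then show False using assms by (simp add: rho_inverse vr_inverse)
  qed
qed

lemma vr_rho_pi: "vr (\<rho> \<pi>) = val_pi"
proof -
  have rp: "\<rho> \<pi> \<noteq> 0" using pi_nz by simp
  obtain m :: int where m: "vr (\<rho> \<pi>) = of_int m * val_pi" using vr_multiple_of_val_pi[OF rp] by blast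
  have "vr (\<rho> \<pi>) > 0" using rho_vr_pos pi_nz vr_pi val_pi_pos by simp
  then have mpos: "m > 0" using m val_pi_pos by (simp add: zero_less_mult_iff)
  define k where "k = nat m"
  have km: "real k = of_int m" using mpos k_def by simp
  define u where "u = \<rho> \<pi> * inverse (\<pi> ^ k)"
  have pk: "\<pi> ^ k \<noteq> 0" using pi_nz by simp
  have u0: "u \<noteq> 0" unfolding u_def using pk rp by simp
  have "vr u = 0" unfolding u_def using vr_mult[OF rp] pk vr_inverse vr_power pi_nz m km vr_pi
    by simp
  then have "vr (\<rho> u) = 0" using rho_vr_zero u0 by blast
  moreover have "\<rho> u = inverse (\<rho> \<pi> ^ k) * \<pi>" unfolding u_def by (simp add: rho_mult rho_inverse rho_power)
  moreover have "vr (inverse (\<rho> \<pi> ^ k) * \<pi>) = - (real k * (of_int m * val_pi)) + val_pi"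
    using vr_mult[of "inverse (\<rho> \<pi> ^ k)" \<pi>] rp pi_nz vr_inverse vr_power m vr_pi by simp
  ultimately have "real k * (of_int m * val_pi) = val_pi" by simp
  then have "of_int m * of_int m = (1::real)" using km val_pi_pos
    by (metis mult.assoc mult_cancel_right1 order_less_irrefl)
  then have "m * m = 1" by (metis of_int_eq_1_iff of_int_mult)
  then have "m = 1" using mpos by (metis mult_cancel_left1 pos_zmult_eq_1_iff)
  then show ?thesis using m by simp
qed

lemma vr_rho: "x \<noteq> 0 \<Longrightarrow> vr (\<rho> x) = vr x"
proof -
  have main: "vr (\<rho> x) = vr x" if x: "x \<noteq> 0" and n: "vr x = real k * val_pi" for x k
  proof -
    define u where "u = x * inverse (\<pi> ^ k)"
    have pk: "\<pi> ^ k \<noteq> 0" using pi_nz by simp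
    have u0: "u \<noteq> 0" using x pk u_def by simp
    have "vr u = 0" unfolding u_def using vr_mult[OF x] pk vr_inverse vr_power pi_nz n vr_pi by simp
    then have "vr (\<rho> u) = 0" using rho_vr_zero u0 by blast
    moreover have "\<rho> u = inverse (\<rho> \<pi> ^ k) * \<rho> x" unfolding u_def by (simp add: rho_mult rho_inverse rho_power)
    moreover have "vr (inverse (\<rho> \<pi> ^ k) * \<rho> x) = - (real k * val_pi) + vr (\<rho> x)"
      using vr_mult[of "inverse (\<rho> \<pi> ^ k)" "\<rho> x"] x pi_nz vr_inverse vr_power vr_rho_pi by simp
    ultimately show ?thesis using n by simp
  qed
  assume x: "x \<noteq> 0"
  obtain n :: int where n: "vr x = of_int n * val_pi" using vr_multiple_of_val_pi[OF x] by blast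
  show ?thesis
  proof (cases "n \<ge> 0")
    case True
    then show ?thesis using main[OF x, of "nat n"] n by simp
  next
    case False
    have ix: "inverse x \<noteq> 0" using x by simp
    have "vr (inverse x) = real (nat (- n)) * val_pi" using False n vr_inverse[OF x] by simp
    then have "vr (\<rho> (inverse x)) = vr (inverse x)" using main[OF ix] by blast
    then show ?thesis using x by (simp add: rho_inverse vr_inverse)
  qed
qed

lemma nu_rho[simp]: "\<nu> (\<rho> x) = \<nu> x"
  by (cases "x = 0") (auto simp: nu_vr vr_rho)

lemma pD_iff: "a \<in> pD \<nu> \<longleftrightarrow> \<nu> a > 0" by (simp add: pD_def)

lemma pD_0[simp]: "0 \<in> pD \<nu>" by (simp add: pD_def)

lemma pD_add: "a \<in> pD \<nu> \<Longrightarrow> b \<in> pD \<nu> \<Longrightarrow> a + b \<in> pD \<nu>"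
  unfolding pD_def using nu_add[of a b] by (auto simp: min_def split: if_splits)

lemma pD_sum: "(\<And>i. i \<in> A \<Longrightarrow> f i \<in> pD \<nu>) \<Longrightarrow> (\<Sum>i\<in>A. f i) \<in> pD \<nu>"
  by (induction A rule: infinite_finite_induct) (auto intro: pD_add)

lemma nu_ge_mult: "ereal K \<le> \<nu> a \<Longrightarrow> 0 \<le> \<nu> b \<Longrightarrow> ereal K \<le> \<nu> (a * b)"
  using add_mono[of "ereal K" "\<nu> a" 0 "\<nu> b"] by (simp add: nu_mult)

lemma nu_nonneg_mult: "0 \<le> \<nu> a \<Longrightarrow> 0 \<le> \<nu> b \<Longrightarrow> 0 \<le> \<nu> (a * b)"
  using nu_ge_mult[of 0 a b] by (simp add: zero_ereal_def)

lemma nu_add_ge: "ereal K \<le> \<nu> a \<Longrightarrow> ereal K \<le> \<nu> b \<Longrightarrow> ereal K \<le> \<nu> (a + b)"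
  using nu_add[of a b] by (simp add: min_def split: if_splits)

lemma nu_sum_ge: "(\<And>i. i \<in> A \<Longrightarrow> ereal K \<le> \<nu> (f i)) \<Longrightarrow> ereal K \<le> \<nu> (\<Sum>i\<in>A. f i)"
  by (induction A rule: infinite_finite_induct) (auto intro: nu_add_ge)

lemma nu_nonneg_add: "0 \<le> \<nu> a \<Longrightarrow> 0 \<le> \<nu> b \<Longrightarrow> 0 \<le> \<nu> (a + b)"
  using nu_add_ge[of 0 a b] by (simp add: zero_ereal_def)

lemma nu_prod_nonneg: "ereal (- B) \<le> \<nu> x \<Longrightarrow> ereal B \<le> \<nu> y \<Longrightarrow> 0 \<le> \<nu> (x * y)"
  using add_mono[of "ereal (- B)" "\<nu> x" "ereal B" "\<nu> y"] by (simp add: nu_mult flip: zero_ereal_def)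

lemma nu_pos_mult: "0 < \<nu> a \<Longrightarrow> 0 \<le> \<nu> b \<Longrightarrow> 0 < \<nu> (a * b)"
  by (cases "a = 0"; cases "b = 0") (auto simp: nu_vr vr_mult zero_ereal_def)

lemma nu_pos_mult': "0 \<le> \<nu> a \<Longrightarrow> 0 < \<nu> b \<Longrightarrow> 0 < \<nu> (a * b)"
  by (cases "a = 0"; cases "b = 0") (auto simp: nu_vr vr_mult zero_ereal_def)

lemma nu_pi_pos: "0 < \<nu> \<pi>" using nu_pi val_pi_pos by (simp add: zero_ereal_def)

lemma nu_pi_power: "\<nu> (\<pi> ^ N) = ereal (real N * val_pi)"
  using nu_vr[of "\<pi> ^ N"] vr_power[OF pi_nz] pi_nz vr_pi by simp

lemma exists_pi_power_ge: "\<exists>N. K \<le> real N * val_pi"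
proof -
  obtain N :: nat where "K / val_pi \<le> real N" using real_arch_simple by blast
  then show ?thesis using val_pi_pos by (auto simp: divide_le_eq)
qed

lemma exists_min_vr:
  fixes K :: real
  assumes "a \<in> A" "0 \<notin> A" and bounded: "\<And>x. x \<in> A \<Longrightarrow> ereal K \<le> \<nu> x"
  obtains a0 where "a0 \<in> A" "\<And>x. x \<in> A \<Longrightarrow> vr a0 \<le> vr x"
proof -
  define z0 :: int where "z0 = \<lceil>K / val_pi\<rceil>"
  have z0_le: "z0 \<le> z" if "x \<in> A" "vr x = of_int z * val_pi" for x z
  proof -
    have "x \<noteq> 0" using that(1) assms(2) by blast
    then have "K \<le> of_int z * val_pi" using bounded[OF that(1)] nu_vr[of x] that(2) by simp
    then have "K / val_pi \<le> of_int z" using val_pi_pos by (simp add: pos_divide_le_eq)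
    then show ?thesis unfolding z0_def by (simp add: ceiling_le_iff)
  qed
  define Z where "Z = {n::nat. \<exists>x\<in>A. vr x = of_int (int n + z0) * val_pi}"
  have level_in_Z: "nat (z - z0) \<in> Z" if "x \<in> A" "vr x = of_int z * val_pi" for x z
  proof -
    have "int (nat (z - z0)) + z0 = z" using z0_le[OF that] by simp
    then show ?thesis unfolding Z_def using that by (intro CollectI bexI[of _ x]) simp_all
  qed
  have "a \<noteq> 0" using assms(1,2) by blast
  then obtain z where "vr a = of_int z * val_pi" using vr_multiple_of_val_pi by blast
  then have "nat (z - z0) \<in> Z" using level_in_Z assms(1) by blast
  then have "(LEAST n. n \<in> Z) \<in> Z" by (rule LeastI)
  then obtain a0 where a0: "a0 \<in> A" "vr a0 = of_int (int (LEAST n. n \<in> Z) + z0) * val_pi"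
    unfolding Z_def by blast
  have "vr a0 \<le> vr x" if x: "x \<in> A" for x
  proof -
    have "x \<noteq> 0" using x assms(2) by blast
    then obtain z where z: "vr x = of_int z * val_pi" using vr_multiple_of_val_pi by blast
    have "(LEAST n. n \<in> Z) \<le> nat (z - z0)" using level_in_Z[OF x z] by (rule Least_le)
    then have "int (LEAST n. n \<in> Z) + z0 \<le> z" using z0_le[OF x z] by linarith
    then have "of_int (int (LEAST n. n \<in> Z) + z0) * val_pi \<le> of_int z * val_pi"
      using val_pi_pos by (intro mult_right_mono) simp_all
    then show ?thesis using a0(2) z by simp
  qed
  then show ?thesis using that a0(1) by blast
qed

lemma nu_conj_pi: "\<nu> (\<rho> (inverse \<pi>) * a * \<pi>) = \<nu> a"
proof (cases "a = 0")
  case False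
  have "vr (\<rho> (inverse \<pi>) * a * \<pi>) = vr a"
    using False pi_nz by (simp add: vr_mult vr_rho vr_inverse)
  then show ?thesis using False pi_nz by (simp add: nu_vr)
qed simp

lemma nu_ge_neg_sum_abs_vr: "(j::nat) < N \<Longrightarrow> (i::nat) < n \<Longrightarrow> ereal (- (\<Sum>j<N. \<Sum>i<n. \<bar>vr (F j i)\<bar>)) \<le> \<nu> (F j i)"
  using abs_le_double_sum[of j N i n "\<lambda>j i. vr (F j i)"]
  by (cases "F j i = 0") (auto simp: nu_vr)

end

section \<open>Lattices spanned by families\<close>

locale valued_vector_space = valued_involution \<nu> \<pi> \<rho> + right_vector_space sm
  for \<nu> :: "'d::division_ring \<Rightarrow> ereal" and \<pi> :: 'd and \<rho> :: "'d \<Rightarrow> 'd"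
    and sm :: "'v::ab_group_add \<Rightarrow> 'd \<Rightarrow> 'v"
begin

definition o_module :: "'v set \<Rightarrow> bool" where
  "o_module X \<longleftrightarrow> 0 \<in> X \<and> (\<forall>x\<in>X. \<forall>y\<in>X. x + y \<in> X) \<and> (\<forall>x\<in>X. \<forall>a. 0 \<le> \<nu> a \<longrightarrow> sm x a \<in> X)"

definition o_lattice :: "nat \<Rightarrow> (nat \<Rightarrow> 'v) \<Rightarrow> 'v set" where
  "o_lattice n b = {lcomb sm n b c | c. \<forall>i<n. 0 \<le> \<nu> (c i)}"

lemma o_module_lcomb:
  assumes "o_module X" "\<And>i. i < n \<Longrightarrow> b i \<in> X" "\<And>i. i < n \<Longrightarrow> 0 \<le> \<nu> (c i)"
  shows "lcomb sm n b c \<in> X"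
  using assms(2,3)
proof (induction n)
  case 0 then show ?case using assms(1) by (simp add: o_module_def)
next
  case (Suc n) then show ?case using assms(1) unfolding o_module_def by (simp add: lcomb_Suc)
qed

lemma o_lattice_subset: "o_module X \<Longrightarrow> (\<And>i. i < n \<Longrightarrow> b i \<in> X) \<Longrightarrow> o_lattice n b \<subseteq> X"
  unfolding o_lattice_def using o_module_lcomb by blast

lemma o_module_o_lattice: "o_module (o_lattice n b)"
  unfolding o_module_def
proof (intro conjI ballI allI impI)
  show "0 \<in> o_lattice n b" unfolding o_lattice_def using lcomb_zero by force
next
  fix x y assume "x \<in> o_lattice n b" "y \<in> o_lattice n b"
  then obtain c d where "x = lcomb sm n b c" "\<forall>i<n. 0 \<le> \<nu> (c i)" "y = lcomb sm n b d" "\<forall>i<n. 0 \<le> \<nu> (d i)"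
    unfolding o_lattice_def by blast
  then show "x + y \<in> o_lattice n b" unfolding o_lattice_def using lcomb_add nu_nonneg_add by force
next
  fix x a assume "x \<in> o_lattice n b" "0 \<le> \<nu> a"
  then obtain c where "x = lcomb sm n b c" "\<forall>i<n. 0 \<le> \<nu> (c i)"
    unfolding o_lattice_def by blast
  then show "sm x a \<in> o_lattice n b" unfolding o_lattice_def using lcomb_sm nu_nonneg_mult \<open>0 \<le> \<nu> a\<close> by force
qed

lemma o_lattice_generator: "i < n \<Longrightarrow> 0 \<le> \<nu> a \<Longrightarrow> sm (b i) a \<in> o_lattice n b"
  unfolding o_lattice_def using lcomb_unit[of i n b a]
  by (intro CollectI exI[of _ "\<lambda>j. if j = i then a else 0"]) auto

lemma o_lattice_subset_span: "o_lattice n b \<subseteq> span_fam sm n b" unfolding o_lattice_def span_fam_def by blast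

lemma o_lattice_extend:
  assumes om: "o_module X" and sub: "X \<subseteq> span_fam sm (Suc k) u"
    and b': "\<forall>j<k. b' j \<in> X" "X \<inter> span_fam sm k u = o_lattice k b'"
    and x0: "x0 \<in> X" "x0 = lcomb sm (Suc k) u c0" "c0 k \<noteq> 0"
    and min: "\<And>x c. x \<in> X \<Longrightarrow> x = lcomb sm (Suc k) u c \<Longrightarrow> c k \<noteq> 0 \<Longrightarrow> vr (c0 k) \<le> vr (c k)"
  shows "X = o_lattice (Suc k) (b'(k := x0))"
proof
  show "o_lattice (Suc k) (b'(k := x0)) \<subseteq> X"
    using o_lattice_subset[OF om] b'(1) x0(1) by (simp add: less_Suc_eq)
next
  have extend: "x + sm x0 t \<in> o_lattice (Suc k) (b'(k := x0))"
    if "x \<in> X \<inter> span_fam sm k u" "0 \<le> \<nu> t" for x t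
  proof -
    have "x \<in> o_lattice k b'" using that(1) b'(2) by simp
    then obtain d where d: "x = lcomb sm k b' d" "\<forall>i<k. 0 \<le> \<nu> (d i)"
      unfolding o_lattice_def by blast
    have "x + sm x0 t = lcomb sm (Suc k) (b'(k := x0)) (d(k := t))"
      using d(1) by (simp add: lcomb_Suc lcomb_upd_coeff lcomb_upd_family)
    moreover have "\<forall>i<Suc k. 0 \<le> \<nu> ((d(k := t)) i)" using d(2) that(2) by (auto simp: less_Suc_eq)
    ultimately show ?thesis unfolding o_lattice_def by blast
  qed
  show "X \<subseteq> o_lattice (Suc k) (b'(k := x0))"
  proof
    fix x assume x: "x \<in> X"
    obtain c where c: "x = lcomb sm (Suc k) u c" using sub x unfolding span_fam_def by blast
    show "x \<in> o_lattice (Suc k) (b'(k := x0))"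
    proof (cases "c k = 0")
      case True
      then have "x \<in> X \<inter> span_fam sm k u" using x c by (simp add: lcomb_Suc span_fam_def)
      then show ?thesis using extend[of x 0] by simp
    next
      case False
      define t where "t = inverse (c0 k) * c k"
      have t0: "t \<noteq> 0" using False x0(3) t_def by simp
      have "vr t = vr (c k) - vr (c0 k)" unfolding t_def using vr_mult x0(3) False vr_inverse by simp
      then have "vr t \<ge> 0" using min[OF x c False] by simp
      then have t: "0 \<le> \<nu> t" using nu_vr[OF t0] by (simp add: zero_ereal_def)
      have "x + sm x0 (- t) \<in> X" using om x x0(1) t unfolding o_module_def by simp
      moreover have "x + sm x0 (- t) = lcomb sm k u (\<lambda>i. c i + c0 i * (- t))"
      proof -
        have "x + sm x0 (- t) = lcomb sm (Suc k) u (\<lambda>i. c i + c0 i * (- t))"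
          unfolding c x0(2) by (simp add: lcomb_sm lcomb_add)
        also have "\<dots> = lcomb sm k u (\<lambda>i. c i + c0 i * (- t))"
          using x0(3) by (intro lcomb_Suc_last_zero) (simp add: t_def mult.assoc[symmetric])
        finally show ?thesis .
      qed
      ultimately have "x + sm x0 (- t) \<in> X \<inter> span_fam sm k u" unfolding span_fam_def by blast
      then show ?thesis using extend[of "x + sm x0 (- t)" t] t by (simp add: sm_minusR)
    qed
  qed
qed

lemma exists_min_last_coeff:
  fixes K K2 :: real
  assumes bd: "\<forall>x\<in>X. \<forall>c. x = lcomb sm (Suc k) u c \<longrightarrow> (\<forall>i<Suc k. ereal K \<le> \<nu> (c i))"
    and full: "\<forall>i<Suc k. \<forall>a. ereal K2 \<le> \<nu> a \<longrightarrow> sm (u i) a \<in> X"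
  obtains c0 where "lcomb sm (Suc k) u c0 \<in> X" "c0 k \<noteq> 0"
    "\<And>c. lcomb sm (Suc k) u c \<in> X \<Longrightarrow> c k \<noteq> 0 \<Longrightarrow> vr (c0 k) \<le> vr (c k)"
proof -
  define A where "A = {c k | c. lcomb sm (Suc k) u c \<in> X \<and> c k \<noteq> 0}"
  obtain N where "K2 \<le> real N * val_pi" using exists_pi_power_ge by blast
  then have "sm (u k) (\<pi> ^ N) \<in> X" using full nu_pi_power by simp
  moreover have "sm (u k) (\<pi> ^ N) = lcomb sm (Suc k) u (\<lambda>j. if j = k then \<pi> ^ N else 0)"
    using lcomb_unit[of k "Suc k" u] by simp
  ultimately have pi_A: "\<pi> ^ N \<in> A" unfolding A_def using pi_nz
    by (intro CollectI exI[of _ "\<lambda>j. if j = k then \<pi> ^ N else 0"]) simp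
  have zero_A: "0 \<notin> A" unfolding A_def by auto
  have bounded_A: "ereal K \<le> \<nu> a" if "a \<in> A" for a
    using that bd unfolding A_def by blast
  obtain a0 where "a0 \<in> A" and a0_min: "\<And>a. a \<in> A \<Longrightarrow> vr a0 \<le> vr a"
    using exists_min_vr[OF pi_A zero_A bounded_A] by blast
  then obtain c0 where c0: "lcomb sm (Suc k) u c0 \<in> X" "c0 k \<noteq> 0" "a0 = c0 k"
    unfolding A_def by blast
  have "vr (c0 k) \<le> vr (c k)" if "lcomb sm (Suc k) u c \<in> X" "c k \<noteq> 0" for c
  proof -
    have "c k \<in> A" unfolding A_def using that by blast
    then show ?thesis using a0_min c0(3) by simp
  qed
  then show ?thesis using that c0(1,2) by blast
qed

text \<open>A discrete analogue of Hermite normal form: an \<open>o\<^sub>D\<close>-module squeezed between two scaled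
  copies of the standard lattice of an independent family is itself a standard lattice, built by
  induction on the family, adjoining an element whose last coordinate has minimal valuation.\<close>

lemma bounded_o_module_o_lattice:
  fixes K K2 :: real
  shows "lin_indep sm k u \<Longrightarrow> o_module X \<Longrightarrow> X \<subseteq> span_fam sm k u
    \<Longrightarrow> (\<forall>x\<in>X. \<forall>c. x = lcomb sm k u c \<longrightarrow> (\<forall>i<k. ereal K \<le> \<nu> (c i)))
    \<Longrightarrow> (\<forall>i<k. \<forall>a. ereal K2 \<le> \<nu> a \<longrightarrow> sm (u i) a \<in> X)
    \<Longrightarrow> \<exists>b. lin_indep sm k b \<and> (\<forall>j<k. b j \<in> X) \<and> X = o_lattice k b"
proof (induction k arbitrary: X)
  case 0
  have "X = {0}" using 0(2,3) unfolding o_module_def span_fam_def by auto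
  moreover have "o_lattice 0 b = {0}" for b unfolding o_lattice_def by auto
  ultimately show ?case unfolding lin_indep_def by auto
next
  case (Suc k)
  note ind = Suc(2) and om = Suc(3) and sub = Suc(4) and bd = Suc(5) and full = Suc(6)
  define X' where "X' = X \<inter> span_fam sm k u"
  have "\<exists>b. lin_indep sm k b \<and> (\<forall>j<k. b j \<in> X') \<and> X' = o_lattice k b"
  proof (rule Suc.IH)
    show "lin_indep sm k u" using lin_indep_SucD[OF ind] .
    show "o_module X'"
      using om subspace_span_fam[of k u] unfolding o_module_def X'_def subspace_r_def by auto
    show "X' \<subseteq> span_fam sm k u" unfolding X'_def by blast
    show "\<forall>x\<in>X'. \<forall>c. x = lcomb sm k u c \<longrightarrow> (\<forall>i<k. ereal K \<le> \<nu> (c i))"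
    proof (intro ballI allI impI)
      fix x c i assume x: "x \<in> X'" "x = lcomb sm k u c" "i < k"
      have "x = lcomb sm (Suc k) u (c(k := 0))" using x(2) by (simp add: lcomb_Suc lcomb_upd_coeff)
      moreover have "x \<in> X" using x(1) unfolding X'_def by simp
      ultimately have "\<forall>i<Suc k. ereal K \<le> \<nu> ((c(k := 0)) i)" using bd by blast
      then have "ereal K \<le> \<nu> ((c(k := 0)) i)" using x(3) less_SucI by blast
      then show "ereal K \<le> \<nu> (c i)" using x(3) by simp
    qed
    show "\<forall>i<k. \<forall>a. ereal K2 \<le> \<nu> a \<longrightarrow> sm (u i) a \<in> X'"
      unfolding X'_def using full span_fam_sm[OF span_fam_generator] by auto
  qed
  then obtain b' where b': "lin_indep sm k b'" "\<forall>j<k. b' j \<in> X'" "X' = o_lattice k b'" by blast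
  obtain c0 where c0: "lcomb sm (Suc k) u c0 \<in> X" "c0 k \<noteq> 0"
    and c0_min: "\<And>c. lcomb sm (Suc k) u c \<in> X \<Longrightarrow> c k \<noteq> 0 \<Longrightarrow> vr (c0 k) \<le> vr (c k)"
    using exists_min_last_coeff[OF bd full] by blast
  define x0 where "x0 = lcomb sm (Suc k) u c0"
  have "x0 \<notin> span_fam sm k u"
  proof
    assume "x0 \<in> span_fam sm k u"
    then obtain d where "x0 = lcomb sm k u d" unfolding span_fam_def by blast
    then have "lcomb sm (Suc k) u c0 = lcomb sm (Suc k) u (d(k := 0))"
      unfolding x0_def by (simp add: lcomb_Suc lcomb_upd_coeff)
    then have "c0 k = (d(k := 0)) k" using lcomb_unique[OF ind] by blast
    then show False using c0(2) by simp
  qed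
  moreover have "span_fam sm k b' \<subseteq> span_fam sm k u"
    by (rule span_fam_mono) (use b'(2) in \<open>auto simp: X'_def\<close>)
  ultimately have "lin_indep sm (Suc k) (b'(k := x0))" using lin_indep_snoc[OF b'(1)] by blast
  moreover have "X = o_lattice (Suc k) (b'(k := x0))"
  proof (rule o_lattice_extend[OF om sub _ _ _ x0_def c0(2)])
    show "\<forall>j<k. b' j \<in> X" "X \<inter> span_fam sm k u = o_lattice k b'" using b'(2,3) unfolding X'_def by auto
    show "x0 \<in> X" using c0(1) x0_def by simp
    fix x c assume "x \<in> X" "x = lcomb sm (Suc k) u c" "c k \<noteq> 0"
    then show "vr (c0 k) \<le> vr (c k)" using c0_min by simp
  qed
  moreover have "\<forall>j<Suc k. (b'(k := x0)) j \<in> X"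
    using b'(2) c0(1) unfolding x0_def X'_def by (auto simp: less_Suc_eq)
  ultimately show ?case by blast
qed

lemma o_span_eq_o_lattice:
  assumes "bij_betw f {..<N} S"
  shows "o_span sm \<nu> S = o_lattice N f"
proof
  show "o_span sm \<nu> S \<subseteq> o_lattice N f"
  proof
    fix x assume "x \<in> o_span sm \<nu> S"
    then obtain c where c: "x = lin_comb sm S c" "\<forall>s\<in>S. c s \<in> oD \<nu>" unfolding o_span_def by blast
    have "x = lcomb sm N f (c \<circ> f)" using c(1) lin_comb_as_lcomb[OF assms] by simp
    moreover have "\<forall>i<N. 0 \<le> \<nu> ((c \<circ> f) i)" using c(2) assms bij_betwE unfolding oD_def by fastforce
    ultimately show "x \<in> o_lattice N f" unfolding o_lattice_def by blast
  qed
next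
  show "o_lattice N f \<subseteq> o_span sm \<nu> S"
  proof
    fix x assume "x \<in> o_lattice N f"
    then obtain d where x: "x = lcomb sm N f d" "\<forall>i<N. 0 \<le> \<nu> (d i)" unfolding o_lattice_def by blast
    define c where "c = (\<lambda>s. d (inv_into {..<N} f s))"
    have "lcomb sm N f (c \<circ> f) = lcomb sm N f d"
      by (rule lcomb_cong) (simp add: c_def bij_betw_inv_into_left[OF assms])
    then have "x = lin_comb sm S c" using x lin_comb_as_lcomb[OF assms, of c] by simp
    moreover have "\<forall>s\<in>S. c s \<in> oD \<nu>"
    proof
      fix s assume "s \<in> S"
      then have "inv_into {..<N} f s < N" using assms
        by (metis bij_betw_def inv_into_into lessThan_iff)
      then show "c s \<in> oD \<nu>" using x(2) unfolding c_def oD_def by blast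
    qed
    ultimately show "x \<in> o_span sm \<nu> S" unfolding o_span_def by blast
  qed
qed

lemma o_lattice_full_lattice:
  assumes Y: "subspace_r sm Y" and b: "is_basis sm Y n b"
  shows "full_lattice sm \<nu> Y (o_lattice n b)"
proof -
  have bY: "\<And>i. i < n \<Longrightarrow> b i \<in> Y" and bi: "lin_indep sm n b" and bs: "Y \<subseteq> span_fam sm n b"
    using b is_basis_iff by auto
  have bij: "bij_betw b {..<n} (b ` {..<n})" using lin_indep_inj[OF bi] by (simp add: bij_betw_def)
  have "span_fam sm n b \<subseteq> Y"
  proof
    fix x assume "x \<in> span_fam sm n b"
    then obtain c where "x = lcomb sm n b c" unfolding span_fam_def by blast
    then show "x \<in> Y" using subspace_lcomb[OF Y, of n b c] bY by simp
  qed
  then have ds: "d_span sm (b ` {..<n}) = Y"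
    using d_span_eq_span_fam[OF bij] bs by simp
  have sub: "b ` {..<n} \<subseteq> Y" using bY by auto
  show ?thesis unfolding full_lattice_def
    by (rule exI[of _ "b ` {..<n}"]) (simp add: ds sub o_span_eq_o_lattice[OF bij])
qed

lemma full_lattice_sub: "subspace_r sm Y \<Longrightarrow> full_lattice sm \<nu> Y L \<Longrightarrow> L \<subseteq> Y"
proof -
  assume Y: "subspace_r sm Y" and L: "full_lattice sm \<nu> Y L"
  then obtain S where S: "finite S" "S \<subseteq> Y" "L = o_span sm \<nu> S" unfolding full_lattice_def by blast
  obtain f where f: "bij_betw f {..<card S} S" using S(1) ex_bij_betw_nat_finite lessThan_atLeast0 by metis
  have "\<And>i. i < card S \<Longrightarrow> f i \<in> Y" using f S(2) bij_betwE by blast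
  then show "L \<subseteq> Y" using S(3) o_span_eq_o_lattice[OF f] o_lattice_subset_span subspace_lcomb[OF Y]
    unfolding span_fam_def by blast
qed

lemma bounded_o_module_basis:
  fixes K K2 :: real
  assumes Y: "subspace_r sm Y" and u: "is_basis sm Y n u" and om: "o_module X" and XY: "X \<subseteq> Y"
    and bd: "\<forall>x\<in>X. \<forall>c. x = lcomb sm n u c \<longrightarrow> (\<forall>i<n. ereal K \<le> \<nu> (c i))"
    and full: "\<forall>i<n. \<forall>a. ereal K2 \<le> \<nu> a \<longrightarrow> sm (u i) a \<in> X"
  shows "\<exists>g. is_basis sm Y n g \<and> X = o_lattice n g"
proof -
  have uY: "\<And>i. i < n \<Longrightarrow> u i \<in> Y" and ui: "lin_indep sm n u" and us: "Y \<subseteq> span_fam sm n u"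
    using u is_basis_iff by auto
  obtain g where g: "lin_indep sm n g" "\<forall>j<n. g j \<in> X" "X = o_lattice n g"
    using bounded_o_module_o_lattice[OF ui om _ bd full] XY us by blast
  have "Y \<subseteq> span_fam sm n g"
  proof -
    have "u i \<in> span_fam sm n g" if i: "i < n" for i
    proof -
      obtain M where M: "K2 \<le> real M * val_pi" using exists_pi_power_ge by blast
      have "ereal K2 \<le> \<nu> (\<pi> ^ M)" using nu_pi_power M by simp
      then have "sm (u i) (\<pi> ^ M) \<in> X" using full i by blast
      then have "sm (u i) (\<pi> ^ M) \<in> span_fam sm n g" using g(3) o_lattice_subset_span by blast
      then have "sm (sm (u i) (\<pi> ^ M)) (inverse (\<pi> ^ M)) \<in> span_fam sm n g" by (rule span_fam_sm)
      then show ?thesis using sm_inv[of "\<pi> ^ M" "u i"] pi_nz by simp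
    qed
    then show ?thesis using us span_fam_mono[of n u n g] by blast
  qed
  then have "is_basis sm Y n g" using g XY is_basis_iff by blast
  then show ?thesis using g(3) by blast
qed

lemma o_lattice_coeff_bounded:
  assumes ui: "lin_indep sm n u" and f: "\<forall>j<N. f j \<in> span_fam sm n u"
  obtains B where "\<forall>x\<in>o_lattice N f. \<forall>c. x = lcomb sm n u c \<longrightarrow> (\<forall>i<n. ereal (- B) \<le> \<nu> (c i))"
proof -
  define cf where "cf = (\<lambda>j. SOME c. f j = lcomb sm n u c)"
  have cf: "f j = lcomb sm n u (cf j)" if "j < N" for j
  proof -
    have "\<exists>c. f j = lcomb sm n u c" using f that unfolding span_fam_def by blast
    then show ?thesis unfolding cf_def by (rule someI_ex)
  qed
  define B where "B = (\<Sum>j<N. \<Sum>i<n. \<bar>vr (cf j i)\<bar>)"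
  have "ereal (- B) \<le> \<nu> (c i)" if x: "x \<in> o_lattice N f" and c: "x = lcomb sm n u c" and i: "i < n"
    for x c and i :: nat
  proof -
    obtain d where d: "x = lcomb sm N f d" "\<forall>j<N. 0 \<le> \<nu> (d j)" using x unfolding o_lattice_def by blast
    have "x = (\<Sum>j<N. sm (f j) (d j))" using d(1) unfolding lcomb_def .
    also have "\<dots> = (\<Sum>j<N. lcomb sm n u (\<lambda>i. cf j i * d j))"
      by (rule sum.cong) (auto simp: cf lcomb_sm)
    also have "\<dots> = lcomb sm n u (\<lambda>i. \<Sum>j<N. cf j i * d j)" by (rule sum_lcomb)
    finally have "c i = (\<Sum>j<N. cf j i * d j)" using lcomb_unique[OF ui] c i by metis
    moreover have "ereal (- B) \<le> \<nu> (\<Sum>j<N. cf j i * d j)"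
    proof (rule nu_sum_ge)
      fix j assume "j \<in> {..<N}"
      then show "ereal (- B) \<le> \<nu> (cf j i * d j)"
        using nu_ge_mult[OF nu_ge_neg_sum_abs_vr[of j N i n cf]] d(2) i unfolding B_def by simp
    qed
    ultimately show ?thesis by simp
  qed
  then show ?thesis using that by blast
qed

lemma o_lattice_absorbing:
  fixes n :: nat
  assumes u: "\<forall>i<n. u i \<in> span_fam sm N f"
  obtains B where "\<forall>i<n. \<forall>a. ereal B \<le> \<nu> a \<longrightarrow> sm (u i) a \<in> o_lattice N f"
proof -
  define g where "g = (\<lambda>i. SOME c. u i = lcomb sm N f c)"
  have g: "u i = lcomb sm N f (g i)" if "i < n" for i
  proof -
    have "\<exists>c. u i = lcomb sm N f c" using u that unfolding span_fam_def by blast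
    then show ?thesis unfolding g_def by (rule someI_ex)
  qed
  define B where "B = (\<Sum>i<n. \<Sum>j<N. \<bar>vr (g i j)\<bar>)"
  have "sm (u i) a \<in> o_lattice N f" if i: "i < n" and a: "ereal B \<le> \<nu> a" for i :: nat and a
  proof -
    have "sm (u i) a = lcomb sm N f (\<lambda>j. g i j * a)" using g[OF i] lcomb_sm by simp
    moreover have "0 \<le> \<nu> (g i j * a)" if j: "j < N" for j :: nat
    proof -
      have "ereal (- B) \<le> \<nu> (g i j)" using nu_ge_neg_sum_abs_vr[of i n j N g] i j unfolding B_def by simp
      then show ?thesis using nu_prod_nonneg a by blast
    qed
    ultimately show ?thesis unfolding o_lattice_def by blast
  qed
  then show ?thesis using that by blast
qed

lemma full_lattice_basis:
  assumes Y: "subspace_r sm Y" and u: "is_basis sm Y n u" and L: "full_lattice sm \<nu> Y L"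
  shows "\<exists>b. is_basis sm Y n b \<and> L = o_lattice n b"
proof -
  have uY: "\<forall>i<n. u i \<in> Y" and ui: "lin_indep sm n u" and us: "Y \<subseteq> span_fam sm n u"
    using u is_basis_iff by auto
  obtain S where S: "finite S" "S \<subseteq> Y" "L = o_span sm \<nu> S" "d_span sm S = Y"
    using L unfolding full_lattice_def by blast
  obtain f where f: "bij_betw f {..<card S} S"
    using S(1) ex_bij_betw_nat_finite lessThan_atLeast0 by metis
  have L_eq: "L = o_lattice (card S) f" using S(3) o_span_eq_o_lattice[OF f] by simp
  have Y_eq: "Y = span_fam sm (card S) f" using S(4) d_span_eq_span_fam[OF f] by simp
  have "\<forall>j<card S. f j \<in> span_fam sm n u" using f S(2) us bij_betwE by blast
  then obtain B1 where B1: "\<forall>x\<in>L. \<forall>c. x = lcomb sm n u c \<longrightarrow> (\<forall>i<n. ereal (- B1) \<le> \<nu> (c i))"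
    using o_lattice_coeff_bounded[OF ui] L_eq by blast
  obtain B2 where B2: "\<forall>i<n. \<forall>a. ereal B2 \<le> \<nu> a \<longrightarrow> sm (u i) a \<in> L"
    using o_lattice_absorbing uY Y_eq L_eq by blast
  have "o_module L" using L_eq o_module_o_lattice by simp
  then show ?thesis using bounded_o_module_basis[OF Y u _ full_lattice_sub[OF Y L] B1 B2] by blast
qed

definition join :: "nat \<Rightarrow> (nat \<Rightarrow> 'v) \<Rightarrow> (nat \<Rightarrow> 'v) \<Rightarrow> nat \<Rightarrow> 'v" where
  "join n b g = (\<lambda>i. if i < n then b i else g (i - n))"

lemma lcomb_join: "lcomb sm (n + m) (join n b g) c = lcomb sm n b c + lcomb sm m g (\<lambda>i. c (n + i))"
  unfolding lcomb_split by (simp add: join_def cong: lcomb_cong)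

lemma o_lattice_join: "o_lattice (n + m) (join n b g) = {x + y | x y. x \<in> o_lattice n b \<and> y \<in> o_lattice m g}"
proof
  show "o_lattice (n + m) (join n b g) \<subseteq> {x + y | x y. x \<in> o_lattice n b \<and> y \<in> o_lattice m g}"
  proof
    fix z assume "z \<in> o_lattice (n + m) (join n b g)"
    then obtain c where c: "z = lcomb sm (n + m) (join n b g) c" "\<forall>i<n+m. 0 \<le> \<nu> (c i)" unfolding o_lattice_def by blast
    have "lcomb sm n b c \<in> o_lattice n b" using c(2) unfolding o_lattice_def by force
    moreover have "lcomb sm m g (\<lambda>i. c (n + i)) \<in> o_lattice m g" using c(2) unfolding o_lattice_def by force
    ultimately show "z \<in> {x + y | x y. x \<in> o_lattice n b \<and> y \<in> o_lattice m g}" using c(1) lcomb_join by blast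
  qed
next
  show "{x + y | x y. x \<in> o_lattice n b \<and> y \<in> o_lattice m g} \<subseteq> o_lattice (n + m) (join n b g)"
  proof
    fix z assume "z \<in> {x + y | x y. x \<in> o_lattice n b \<and> y \<in> o_lattice m g}"
    then obtain c d where cd: "z = lcomb sm n b c + lcomb sm m g d" "\<forall>i<n. 0 \<le> \<nu> (c i)" "\<forall>i<m. 0 \<le> \<nu> (d i)"
      unfolding o_lattice_def by blast
    define f where "f = (\<lambda>i. if i < n then c i else d (i - n))"
    have "z = lcomb sm (n + m) (join n b g) f" unfolding lcomb_join f_def cd(1) by (simp cong: lcomb_cong)
    moreover have "\<forall>i<n+m. 0 \<le> \<nu> (f i)" using cd unfolding f_def by auto
    ultimately show "z \<in> o_lattice (n + m) (join n b g)" unfolding o_lattice_def by blast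
  qed
qed

lemma splits_lcomb: "splits sm \<nu> n v \<alpha> \<Lambda> \<longleftrightarrow> (\<forall>x. \<Lambda> x = {lcomb sm n v \<delta> | \<delta>. \<forall>i<n. ereal (x - \<alpha> i) \<le> \<nu> (\<delta> i)})"
  unfolding splits_def lcomb_def by simp

lemma splits_join:
  assumes "splits sm \<nu> n v \<alpha> \<Lambda>" "splits sm \<nu> m w \<beta> M"
  shows "splits sm \<nu> (n + m) (join n v w) (\<lambda>i. if i < n then \<alpha> i else \<beta> (i - n))
    (\<lambda>x. {a + b | a b. a \<in> \<Lambda> x \<and> b \<in> M x})"
  unfolding splits_lcomb
proof
  fix x
  let ?\<gamma> = "\<lambda>i. if i < n then \<alpha> i else \<beta> (i - n)"
  have \<Lambda>: "\<Lambda> x = {lcomb sm n v c | c. \<forall>i<n. ereal (x - \<alpha> i) \<le> \<nu> (c i)}"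
    and M: "M x = {lcomb sm m w d | d. \<forall>i<m. ereal (x - \<beta> i) \<le> \<nu> (d i)}"
    using assms splits_lcomb by blast+
  show "{a + b | a b. a \<in> \<Lambda> x \<and> b \<in> M x} =
    {lcomb sm (n + m) (join n v w) f | f. \<forall>i<n + m. ereal (x - ?\<gamma> i) \<le> \<nu> (f i)}"
  proof (intro equalityI subsetI)
    fix z assume "z \<in> {a + b | a b. a \<in> \<Lambda> x \<and> b \<in> M x}"
    then obtain c d where z: "z = lcomb sm n v c + lcomb sm m w d"
      "\<forall>i<n. ereal (x - \<alpha> i) \<le> \<nu> (c i)" "\<forall>i<m. ereal (x - \<beta> i) \<le> \<nu> (d i)"
      unfolding \<Lambda> M by blast
    define f where "f = (\<lambda>i. if i < n then c i else d (i - n))"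
    have "z = lcomb sm (n + m) (join n v w) f" unfolding lcomb_join f_def z(1) by (simp cong: lcomb_cong)
    moreover have "\<forall>i<n + m. ereal (x - ?\<gamma> i) \<le> \<nu> (f i)" using z(2,3) unfolding f_def by auto
    ultimately show "z \<in> {lcomb sm (n + m) (join n v w) f | f. \<forall>i<n + m. ereal (x - ?\<gamma> i) \<le> \<nu> (f i)}"
      by blast
  next
    fix z assume "z \<in> {lcomb sm (n + m) (join n v w) f | f. \<forall>i<n + m. ereal (x - ?\<gamma> i) \<le> \<nu> (f i)}"
    then obtain f where f: "z = lcomb sm (n + m) (join n v w) f" "\<forall>i<n + m. ereal (x - ?\<gamma> i) \<le> \<nu> (f i)"
      by blast
    have "\<forall>i<n. ereal (x - \<alpha> i) \<le> \<nu> (f i)" using f(2) by (metis trans_less_add1)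
    then have "lcomb sm n v f \<in> \<Lambda> x" unfolding \<Lambda> by blast
    moreover have "ereal (x - \<beta> i) \<le> \<nu> (f (n + i))" if "i < m" for i
      using f(2)[rule_format, of "n + i"] that by simp
    then have "lcomb sm m w (\<lambda>i. f (n + i)) \<in> M x" unfolding M by blast
    ultimately show "z \<in> {a + b | a b. a \<in> \<Lambda> x \<and> b \<in> M x}" unfolding f(1) lcomb_join by blast
  qed
qed

end

section \<open>Hermitian spaces polarized by two maximal isotropic subspaces\<close>

locale polarized_space = valued_vector_space \<nu> \<pi> \<rho> sm
  for \<nu> :: "'d::division_ring \<Rightarrow> ereal" and \<pi> :: 'd and \<rho> :: "'d \<Rightarrow> 'd"
    and sm :: "'v::ab_group_add \<Rightarrow> 'd \<Rightarrow> 'v" +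
  fixes \<epsilon> :: 'd and h :: "'v \<Rightarrow> 'v \<Rightarrow> 'd" and W W' :: "'v set"
  assumes FD: "fin_dim_right_vs sm"
    and EH: "eps_hermitian sm \<rho> \<epsilon> h"
    and ND: "non_degenerate h"
    and MW: "max_totally_isotropic sm h W"
    and MW': "max_totally_isotropic sm h W'"
    and DS: "direct_sum sm W W'"
begin

lemma h_addL: "h (x + y) z = h x z + h y z" using EH unfolding eps_hermitian_def by blast

lemma h_addR: "h x (y + z) = h x y + h x z" using EH unfolding eps_hermitian_def by blast

lemma h_smL: "h (sm x a) y = \<rho> a * h x y" using EH unfolding eps_hermitian_def by blast

lemma h_smR: "h x (sm y b) = h x y * b" using EH unfolding eps_hermitian_def by blast

lemma h_sym: "h y x = \<epsilon> * \<rho> (h x y)" using EH unfolding eps_hermitian_def by blast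

lemma eps_cases: "\<epsilon> = 1 \<or> \<epsilon> = -1" using EH unfolding eps_hermitian_def by blast

lemma h_0L[simp]: "h 0 y = 0" using h_addL[of 0 0 y] by simp

lemma h_0R[simp]: "h x 0 = 0" using h_addR[of x 0 0] by simp

lemma h_minusL: "h (- x) y = - h x y"
  using minus_unique[of "h x y" "h (-x) y"] h_addL[of x "-x" y] by simp

lemma h_minusR: "h x (- y) = - h x y"
  using minus_unique[of "h x y" "h x (-y)"] h_addR[of x y "-y"] by simp

lemma h_diffL: "h (x - y) z = h x z - h y z" using h_addL[of x "-y" z] h_minusL by simp

lemma h_diffR: "h x (y - z) = h x y - h x z" using h_addR[of x y "-z"] h_minusR by simp

lemma h_sumR: "h x (\<Sum>i\<in>A. f i) = (\<Sum>i\<in>A. h x (f i))"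
  by (induction A rule: infinite_finite_induct) (auto simp: h_addR)

lemma h_sumL: "h (\<Sum>i\<in>A. f i) y = (\<Sum>i\<in>A. h (f i) y)"
  by (induction A rule: infinite_finite_induct) (auto simp: h_addL)

lemma h_lcombR: "h x (lcomb sm n u c) = (\<Sum>i<n. h x (u i) * c i)"
  unfolding lcomb_def by (simp add: h_sumR h_smR)

lemma h_lcombL: "h (lcomb sm n u c) y = (\<Sum>i<n. \<rho> (c i) * h (u i) y)"
  unfolding lcomb_def by (simp add: h_sumL h_smL)

lemma rho_eps[simp]: "\<rho> \<epsilon> = \<epsilon>" using eps_cases by auto

lemma eps_sq[simp]: "\<epsilon> * \<epsilon> = 1" using eps_cases by auto

lemma eps_nz[simp]: "\<epsilon> \<noteq> 0" using eps_sq by (metis mult_zero_left zero_neq_one)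

lemma vr_eps[simp]: "vr \<epsilon> = 0" using eps_cases by auto

lemma nu_eps[simp]: "\<nu> \<epsilon> = 0" using nu_vr[OF eps_nz] by (simp add: zero_ereal_def)

lemma h_zero_sym: "h x y = 0 \<longleftrightarrow> h y x = 0"
  using h_sym[of y x] h_sym[of x y] by auto

lemma nondeg_left: "(\<And>y. h x y = 0) \<Longrightarrow> x = 0" using ND unfolding non_degenerate_def by blast

lemma nondeg_right: "(\<And>x. h x y = 0) \<Longrightarrow> y = 0" using nondeg_left h_zero_sym by blast

lemma subspace_W: "subspace_r sm W" and subspace_W': "subspace_r sm W'"
  using MW MW' unfolding max_totally_isotropic_def totally_isotropic_def by blast+

lemma isotropic_W: "x \<in> W \<Longrightarrow> y \<in> W \<Longrightarrow> h x y = 0"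
  using MW unfolding max_totally_isotropic_def totally_isotropic_def by blast

lemma isotropic_W': "x \<in> W' \<Longrightarrow> y \<in> W' \<Longrightarrow> h x y = 0"
  using MW' unfolding max_totally_isotropic_def totally_isotropic_def by blast

lemma W_inter_W': "W \<inter> W' = {0}" using DS unfolding direct_sum_def by blast

lemma decomp_W_W': "\<exists>w\<in>W. \<exists>w'\<in>W'. v = w + w'" using DS unfolding direct_sum_def by blast

lemma W_0[simp]: "0 \<in> W" and W'_0[simp]: "0 \<in> W'" using subspace_W subspace_W' unfolding subspace_r_def by auto

lemma W_add: "x \<in> W \<Longrightarrow> y \<in> W \<Longrightarrow> x + y \<in> W" using subspace_W unfolding subspace_r_def by auto

lemma W'_add: "x \<in> W' \<Longrightarrow> y \<in> W' \<Longrightarrow> x + y \<in> W'" using subspace_W' unfolding subspace_r_def by auto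

lemma W_sm: "x \<in> W \<Longrightarrow> sm x a \<in> W" using subspace_W unfolding subspace_r_def by auto

lemma W'_sm: "x \<in> W' \<Longrightarrow> sm x a \<in> W'" using subspace_W' unfolding subspace_r_def by auto

lemma W_minus: "x \<in> W \<Longrightarrow> - x \<in> W" using W_sm[of x "-1"] sm_minusR by simp

lemma W'_minus: "x \<in> W' \<Longrightarrow> - x \<in> W'" using W'_sm[of x "-1"] sm_minusR by simp

lemma W_diff: "x \<in> W \<Longrightarrow> y \<in> W \<Longrightarrow> x - y \<in> W" using W_add W_minus by (metis diff_conv_add_uminus)

lemma W'_diff: "x \<in> W' \<Longrightarrow> y \<in> W' \<Longrightarrow> x - y \<in> W'" using W'_add W'_minus by (metis diff_conv_add_uminus)

lemma W_lcomb: "(\<And>i. i < n \<Longrightarrow> u i \<in> W) \<Longrightarrow> lcomb sm n u c \<in> W" using subspace_lcomb[OF subspace_W] by blast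

lemma W'_lcomb: "(\<And>i. i < n \<Longrightarrow> u i \<in> W') \<Longrightarrow> lcomb sm n u c \<in> W'" using subspace_lcomb[OF subspace_W'] by blast

lemma decomp_unique:
  assumes "w1 \<in> W" "w2 \<in> W" "y1 \<in> W'" "y2 \<in> W'" "w1 + y1 = w2 + y2"
  shows "w1 = w2 \<and> y1 = y2"
proof -
  have "w1 - w2 = y2 - y1" using assms(5) by (simp add: algebra_simps)
  moreover have "w1 - w2 \<in> W" "y2 - y1 \<in> W'" using assms W_diff W'_diff by auto
  ultimately have "w1 - w2 \<in> W \<inter> W'" by simp
  then have "w1 - w2 = 0" using W_inter_W' by blast
  then show ?thesis using assms(5) by simp
qed

lemma proj1_eq: "w \<in> W \<Longrightarrow> y \<in> W' \<Longrightarrow> proj1 W W' (w + y) = w"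
  unfolding proj1_def by (rule the_equality) (use decomp_unique in blast)+

lemma proj2_eq: "w \<in> W \<Longrightarrow> y \<in> W' \<Longrightarrow> proj2 W W' (w + y) = y"
  unfolding proj2_def by (rule the_equality) (use decomp_unique in blast)+

lemma proj_W_W': "proj1 W W' v \<in> W" "proj2 W W' v \<in> W'" "v = proj1 W W' v + proj2 W W' v"
proof -
  obtain w y where "w \<in> W" "y \<in> W'" "v = w + y" using decomp_W_W' by blast
  then show "proj1 W W' v \<in> W" "proj2 W W' v \<in> W'" "v = proj1 W W' v + proj2 W W' v"
    using proj1_eq proj2_eq by auto
qed

lemma proj1_W: "w \<in> W \<Longrightarrow> proj1 W W' w = w" using proj1_eq[of w 0] by simp

lemma proj2_W': "y \<in> W' \<Longrightarrow> proj2 W W' y = y" using proj2_eq[of 0 y] by simp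

lemma proj1_lin: "proj1 W W' (x + y) = proj1 W W' x + proj1 W W' y"
  "proj1 W W' (sm x a) = sm (proj1 W W' x) a"
proof -
  have "x + y = (proj1 W W' x + proj1 W W' y) + (proj2 W W' x + proj2 W W' y)"
    using proj_W_W'(3)[of x] proj_W_W'(3)[of y] by (simp add: algebra_simps)
  then show "proj1 W W' (x + y) = proj1 W W' x + proj1 W W' y"
    using proj1_eq proj_W_W' W_add W'_add by metis
  have "sm x a = sm (proj1 W W' x) a + sm (proj2 W W' x) a"
    using proj_W_W'(3)[of x] sm_addL by metis
  then show "proj1 W W' (sm x a) = sm (proj1 W W' x) a"
    using proj1_eq proj_W_W' W_sm W'_sm by metis
qed

lemma proj2_lin: "proj2 W W' (x + y) = proj2 W W' x + proj2 W W' y"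
  "proj2 W W' (sm x a) = sm (proj2 W W' x) a"
proof -
  have "x + y = (proj1 W W' x + proj1 W W' y) + (proj2 W W' x + proj2 W W' y)"
    using proj_W_W'(3)[of x] proj_W_W'(3)[of y] by (simp add: algebra_simps)
  then show "proj2 W W' (x + y) = proj2 W W' x + proj2 W W' y"
    using proj2_eq proj_W_W' W_add W'_add by metis
  have "sm x a = sm (proj1 W W' x) a + sm (proj2 W W' x) a"
    using proj_W_W'(3)[of x] sm_addL by metis
  then show "proj2 W W' (sm x a) = sm (proj2 W W' x) a"
    using proj2_eq proj_W_W' W_sm W'_sm by metis
qed

lemma W_separated: "x \<in> W \<Longrightarrow> (\<And>y. y \<in> W' \<Longrightarrow> h y x = 0) \<Longrightarrow> x = 0"
proof -
  assume x: "x \<in> W" and H: "\<And>y. y \<in> W' \<Longrightarrow> h y x = 0"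
  show "x = 0"
  proof (rule nondeg_right)
    fix z
    have "h z x = h (proj1 W W' z) x + h (proj2 W W' z) x"
      using proj_W_W'(3)[of z] h_addL by metis
    then show "h z x = 0" using isotropic_W[OF proj_W_W'(1) x] H[OF proj_W_W'(2)] by simp
  qed
qed

lemma W'_separated: "y \<in> W' \<Longrightarrow> (\<And>x. x \<in> W \<Longrightarrow> h x y = 0) \<Longrightarrow> y = 0"
proof -
  assume y: "y \<in> W'" and H: "\<And>x. x \<in> W \<Longrightarrow> h x y = 0"
  show "y = 0"
  proof (rule nondeg_right)
    fix z
    have "h z y = h (proj1 W W' z) y + h (proj2 W W' z) y"
      using proj_W_W'(3)[of z] h_addL by metis
    then show "h z y = 0" using isotropic_W'[OF proj_W_W'(2) y] H[OF proj_W_W'(1)] by simp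
  qed
qed

lemma finite_spanning_family: "\<exists>N f. UNIV \<subseteq> span_fam sm N f"
proof -
  obtain S where S: "finite S" "d_span sm S = UNIV" using FD unfolding fin_dim_right_vs_def by blast
  obtain f where f: "bij_betw f {..<card S} S" using S(1) ex_bij_betw_nat_finite lessThan_atLeast0 by metis
  show ?thesis using d_span_eq_span_fam[OF f] S(2) by auto
qed

lemma exists_basis_W: "\<exists>n v. is_basis sm W n v"
proof -
  obtain N f where f: "UNIV \<subseteq> span_fam sm N f" using finite_spanning_family by blast
  have "W \<subseteq> span_fam sm N (proj1 W W' \<circ> f)"
  proof
    fix x assume x: "x \<in> W"
    obtain c where "x = lcomb sm N f c" using f unfolding span_fam_def by blast
    then have "x = lcomb sm N (proj1 W W' \<circ> f) c"
      using lin_lcomb[of "proj1 W W'"] proj1_lin proj1_W[OF x] by metis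
    then show "x \<in> span_fam sm N (proj1 W W' \<circ> f)" unfolding span_fam_def by blast
  qed
  then show ?thesis using exists_basis_of_span[OF subspace_W] by blast
qed

lemma exists_basis_W': "\<exists>n v. is_basis sm W' n v"
proof -
  obtain N f where f: "UNIV \<subseteq> span_fam sm N f" using finite_spanning_family by blast
  have "W' \<subseteq> span_fam sm N (proj2 W W' \<circ> f)"
  proof
    fix x assume x: "x \<in> W'"
    obtain c where "x = lcomb sm N f c" using f unfolding span_fam_def by blast
    then have "x = lcomb sm N (proj2 W W' \<circ> f) c"
      using lin_lcomb[of "proj2 W W'"] proj2_lin proj2_W'[OF x] by metis
    then show "x \<in> span_fam sm N (proj2 W W' \<circ> f)" unfolding span_fam_def by blast
  qed
  then show ?thesis using exists_basis_of_span[OF subspace_W'] by blast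
qed

definition dual_families :: "nat \<Rightarrow> (nat \<Rightarrow> 'v) \<Rightarrow> (nat \<Rightarrow> 'v) \<Rightarrow> bool" where
  "dual_families n a b \<longleftrightarrow> (\<forall>i<n. \<forall>j<n. h (a i) (b j) = (if i = j then 1 else 0))"

lemma dual_families_lcomb_right:
  assumes "dual_families n a b" "i < n"
  shows "h (a i) (lcomb sm n b c) = c i"
proof -
  have "h (a i) (lcomb sm n b c) = (\<Sum>j<n. if i = j then c j else 0)"
    unfolding h_lcombR by (rule sum.cong) (use assms in \<open>auto simp: dual_families_def\<close>)
  then show ?thesis using assms(2) by simp
qed

lemma dual_families_lcomb_left:
  assumes "dual_families n a b" "i < n"
  shows "h (lcomb sm n a c) (b i) = \<rho> (c i)"
proof -
  have "h (lcomb sm n a c) (b i) = (\<Sum>j<n. if i = j then \<rho> (c j) else 0)"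
    unfolding h_lcombL by (rule sum.cong) (use assms in \<open>auto simp: dual_families_def\<close>)
  then show ?thesis using assms(2) by simp
qed

lemma dual_families_sym:
  assumes "dual_families n a b" "i < n" "j < n"
  shows "h (b i) (a j) = (if i = j then \<epsilon> else 0)"
proof -
  have "h (b i) (a j) = \<epsilon> * \<rho> (h (a j) (b i))" by (rule h_sym)
  also have "h (a j) (b i) = (if j = i then 1 else 0)" using assms unfolding dual_families_def by blast
  finally show ?thesis by auto
qed

lemma dual_families_lcomb_sym:
  assumes "dual_families n a b" "i < n"
  shows "h (b i) (lcomb sm n a c) = \<epsilon> * c i"
proof -
  have "h (b i) (lcomb sm n a c) = (\<Sum>j<n. if i = j then \<epsilon> * c j else 0)"
    unfolding h_lcombR by (rule sum.cong) (use dual_families_sym[OF assms] in auto)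
  then show ?thesis using assms(2) by simp
qed

lemma dual_families_swap:
  assumes "dual_families n a b"
  shows "dual_families n (\<lambda>i. sm (b i) \<epsilon>) a"
  unfolding dual_families_def h_smL using dual_families_sym[OF assms] by auto

lemma dual_families_lin_indep:
  assumes "dual_families n a b"
  shows "lin_indep sm n b"
  unfolding lin_indep_def
proof (intro allI impI)
  fix c i assume "lcomb sm n b c = 0" "i < n"
  then show "c i = 0" using dual_families_lcomb_right[OF assms, of i c] by simp
qed

lemma W'_expansion:
  assumes v: "is_basis sm W n v" and w: "\<forall>j<n. w j \<in> W'" "dual_families n v w" and y: "y \<in> W'"
  shows "y = lcomb sm n w (\<lambda>j. h (v j) y)"
proof -
  define z where "z = y - lcomb sm n w (\<lambda>j. h (v j) y)"
  have "z \<in> W'" unfolding z_def using W'_diff[OF y W'_lcomb] w(1) by blast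
  moreover have "h x z = 0" if x: "x \<in> W" for x
  proof -
    obtain c where x: "x = lcomb sm n v c" using v x unfolding is_basis_iff span_fam_def by blast
    have "h (v i) z = 0" if "i < n" for i
      unfolding z_def h_diffR using dual_families_lcomb_right[OF w(2) that] by simp
    then show ?thesis unfolding x h_lcombL by simp
  qed
  ultimately have "z = 0" using W'_separated by blast
  then show ?thesis unfolding z_def by simp
qed

text \<open>Dual bases are found in coordinates: \<open>y \<mapsto> (h(v\<^sub>i, y))\<^sub>i\<close> embeds \<open>W'\<close> into the
  coordinate space \<open>D\<^sup>n\<close>, so by the exchange lemma \<open>dim W' = n\<close> and the embedding is onto.\<close>

definition pairing_coords :: "nat \<Rightarrow> (nat \<Rightarrow> 'v) \<Rightarrow> 'v \<Rightarrow> (nat \<Rightarrow> 'd)" where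
  "pairing_coords n a y = (\<lambda>i. if i < n then h (a i) y else 0)"

definition unit_coord :: "nat \<Rightarrow> nat \<Rightarrow> 'd" where "unit_coord k = (\<lambda>i. if i = k then 1 else 0)"

lemma pairing_coords_lcomb:
  "pairing_coords n a (lcomb sm m u c) = lcomb coord_smult m (pairing_coords n a \<circ> u) c"
  unfolding pairing_coords_def by (auto simp: fun_eq_iff lcomb_coord_smult h_lcombR)

lemma finite_support_span: "(\<And>i. i \<ge> n \<Longrightarrow> g i = 0) \<Longrightarrow> g \<in> span_fam coord_smult n unit_coord"
proof -
  assume H: "\<And>i. i \<ge> n \<Longrightarrow> g i = 0"
  have "g i = lcomb coord_smult n unit_coord g i" for i
  proof -
    have "lcomb coord_smult n unit_coord g i = (\<Sum>k<n. (if k = i then g k else 0))"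
      unfolding lcomb_coord_smult unit_coord_def by (rule sum.cong) auto
    also have "\<dots> = g i" using H by (cases "i < n") auto
    finally show ?thesis by simp
  qed
  then have "lcomb coord_smult n unit_coord g = g" by (intro ext) simp
  then show ?thesis unfolding span_fam_def using rangeI[of "lcomb coord_smult n unit_coord" g]
    by (simp only:)
qed

lemma pairing_coords_lin_indep:
  assumes Y: "subspace_r sm Y" and u: "lin_indep sm m u" "\<And>i. i < m \<Longrightarrow> u i \<in> Y"
    and sep: "\<And>y. y \<in> Y \<Longrightarrow> (\<And>i. i < n \<Longrightarrow> h (a i) y = 0) \<Longrightarrow> y = 0"
  shows "lin_indep coord_smult m (pairing_coords n a \<circ> u)"
  unfolding lin_indep_def
proof (intro allI impI)
  fix c i assume c: "lcomb coord_smult m (pairing_coords n a \<circ> u) c = 0" and i: "i < m"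
  have T0: "pairing_coords n a (lcomb sm m u c) = 0" using c pairing_coords_lcomb by simp
  have "h (a j) (lcomb sm m u c) = 0" if "j < n" for j
    using fun_cong[OF T0, of j] that unfolding pairing_coords_def by simp
  then have "lcomb sm m u c = 0" using sep[OF subspace_lcomb[OF Y]] u(2) by blast
  then show "c i = 0" using u(1) i unfolding lin_indep_def by blast
qed

lemma lin_indep_le_separating:
  assumes Y: "subspace_r sm Y" and u: "lin_indep sm m u" "\<And>i. i < m \<Longrightarrow> u i \<in> Y"
    and sep: "\<And>y. y \<in> Y \<Longrightarrow> (\<And>i. i < n \<Longrightarrow> h (a i) y = 0) \<Longrightarrow> y = 0"
  shows "m \<le> n"
proof -
  interpret F: right_vector_space coord_smult by (rule right_vector_space_coord_smult)
  have "\<forall>i<m. (pairing_coords n a \<circ> u) i \<in> span_fam coord_smult n unit_coord"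
    by (auto intro: finite_support_span simp: pairing_coords_def)
  then show ?thesis using F.steinitz pairing_coords_lin_indep[OF assms] by blast
qed

lemma W'_separated_by_basis:
  assumes v: "is_basis sm W n v" and y: "y \<in> W'" "\<And>i. i < n \<Longrightarrow> h (v i) y = 0"
  shows "y = 0"
proof (rule W'_separated[OF y(1)])
  fix x assume "x \<in> W"
  then obtain c where "x = lcomb sm n v c" using v unfolding is_basis_iff span_fam_def by blast
  then show "h x y = 0" using y(2) by (simp add: h_lcombL)
qed

lemma W_separated_by_basis:
  assumes u: "is_basis sm W' m u" and x: "x \<in> W" "\<And>i. i < m \<Longrightarrow> h (u i) x = 0"
  shows "x = 0"
proof (rule W_separated[OF x(1)])
  fix y assume "y \<in> W'"
  then obtain c where "y = lcomb sm m u c" using u unfolding is_basis_iff span_fam_def by blast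
  then show "h y x = 0" using x(2) by (simp add: h_lcombL)
qed

lemma exists_dual_basis:
  assumes v: "is_basis sm W n v"
  shows "\<exists>w. is_basis sm W' n w \<and> dual_families n v w"
proof -
  interpret F: right_vector_space coord_smult by (rule right_vector_space_coord_smult)
  obtain m u where u: "is_basis sm W' m u" using exists_basis_W' by blast
  have vW: "\<And>i. i < n \<Longrightarrow> v i \<in> W" and vi: "lin_indep sm n v"
    using v is_basis_iff by auto
  have uW: "\<And>i. i < m \<Longrightarrow> u i \<in> W'" and ui: "lin_indep sm m u"
    using u is_basis_iff by auto
  have sepW': "y = 0" if "y \<in> W'" "\<And>i. i < n \<Longrightarrow> h (v i) y = 0" for y
    using W'_separated_by_basis[OF v] that by blast
  have "n \<le> m" using lin_indep_le_separating[OF subspace_W vi vW] W_separated_by_basis[OF u] by blast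
  let ?T = "pairing_coords n v"
  have Ti: "lin_indep coord_smult m (?T \<circ> u)"
    using pairing_coords_lin_indep[OF subspace_W' ui uW sepW'] .
  have "\<exists>c. ?T (lcomb sm m u c) = unit_coord j" if j: "j < n" for j
  proof (rule ccontr)
    assume "\<nexists>c. ?T (lcomb sm m u c) = unit_coord j"
    then have "unit_coord j \<notin> span_fam coord_smult m (?T \<circ> u)"
      using pairing_coords_lcomb unfolding span_fam_def by auto
    then have "lin_indep coord_smult (Suc m) ((?T \<circ> u)(m := unit_coord j))"
      by (rule F.lin_indep_snoc[OF Ti])
    moreover have "\<forall>i<Suc m. ((?T \<circ> u)(m := unit_coord j)) i \<in> span_fam coord_smult n unit_coord"
      using j by (auto intro!: finite_support_span simp: pairing_coords_def unit_coord_def)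
    ultimately have "Suc m \<le> n" using F.steinitz by blast
    then show False using \<open>n \<le> m\<close> by simp
  qed
  then obtain C where C: "\<And>j. j < n \<Longrightarrow> ?T (lcomb sm m u (C j)) = unit_coord j" by metis
  define w where "w = (\<lambda>j. lcomb sm m u (C j))"
  have wW: "\<forall>j<n. w j \<in> W'" unfolding w_def using W'_lcomb uW by blast
  have dual: "dual_families n v w"
    unfolding dual_families_def
  proof (intro allI impI)
    fix i j assume "i < n" "j < n"
    then show "h (v i) (w j) = (if i = j then 1 else 0)"
      using fun_cong[OF C[of j], of i] unfolding w_def pairing_coords_def unit_coord_def by auto
  qed
  have "W' \<subseteq> span_fam sm n w" using W'_expansion[OF v wW dual] unfolding span_fam_def by blast
  then have "is_basis sm W' n w" using wW dual_families_lin_indep[OF dual] is_basis_iff by blast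
  then show ?thesis using dual by blast
qed

lemma exists_dual_basis_W':
  assumes v: "is_basis sm W n v"
  shows "\<exists>w. is_basis sm W' n w \<and> dual_families n w v"
proof -
  obtain w where w: "is_basis sm W' n w" and dual: "dual_families n v w"
    using exists_dual_basis[OF v] by blast
  have wW: "\<forall>j<n. w j \<in> W'" using w is_basis_iff by blast
  define w2 where "w2 = (\<lambda>j. sm (w j) \<epsilon>)"
  have dual2: "dual_families n w2 v" unfolding w2_def using dual_families_swap[OF dual] .
  have "lin_indep sm n w2" using dual_families_lin_indep[OF dual_families_swap[OF dual2]] .
  moreover have "W' \<subseteq> span_fam sm n w2"
  proof
    fix y assume y: "y \<in> W'"
    have "y = lcomb sm n w (\<lambda>j. h (v j) y)" using W'_expansion[OF v wW dual y] .
    also have "\<dots> = lcomb sm n w2 (\<lambda>j. \<epsilon> * h (v j) y)"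
      unfolding w2_def by (rule lcomb_cong) (simp flip: sm_mult add: mult.assoc[symmetric])
    finally show "y \<in> span_fam sm n w2" unfolding span_fam_def by blast
  qed
  moreover have "\<forall>j<n. w2 j \<in> W'" unfolding w2_def using wW W'_sm by blast
  ultimately show ?thesis using dual2 is_basis_iff by blast
qed

lemma join_basis:
  assumes b: "is_basis sm W n b" and g: "is_basis sm W' m g"
  shows "is_basis sm UNIV (n + m) (join n b g)"
proof -
  have bW: "\<And>i. i < n \<Longrightarrow> b i \<in> W" and bi: "lin_indep sm n b" and bs: "W \<subseteq> span_fam sm n b"
    using b is_basis_iff by auto
  have gW': "\<And>i. i < m \<Longrightarrow> g i \<in> W'" and gi: "lin_indep sm m g" and gs: "W' \<subseteq> span_fam sm m g"
    using g is_basis_iff by auto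
  have "lin_indep sm (n + m) (join n b g)"
    unfolding lin_indep_def
  proof (intro allI impI)
    fix c i assume c: "lcomb sm (n + m) (join n b g) c = 0" and i: "i < n + m"
    have "lcomb sm n b c + lcomb sm m g (\<lambda>i. c (n + i)) = 0 + 0" using c lcomb_join by simp
    then have "lcomb sm n b c = 0 \<and> lcomb sm m g (\<lambda>i. c (n + i)) = 0"
      using decomp_unique[OF W_lcomb W_0 W'_lcomb W'_0] bW gW' by blast
    then show "c i = 0" using bi gi i unfolding lin_indep_def
      by (metis add_diff_inverse_nat add_less_cancel_left)
  qed
  moreover have "UNIV \<subseteq> span_fam sm (n + m) (join n b g)"
  proof
    fix x :: 'v
    obtain c where c: "proj1 W W' x = lcomb sm n b c" using bs proj_W_W'(1) unfolding span_fam_def by blast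
    obtain d where d: "proj2 W W' x = lcomb sm m g d" using gs proj_W_W'(2) unfolding span_fam_def by blast
    define cd where "cd = (\<lambda>i. if i < n then c i else d (i - n))"
    have "lcomb sm (n + m) (join n b g) cd = lcomb sm n b c + lcomb sm m g d"
      unfolding lcomb_join cd_def by (simp cong: lcomb_cong)
    then have "x = lcomb sm (n + m) (join n b g) cd" using c d proj_W_W'(3)[of x] by simp
    then show "x \<in> span_fam sm (n + m) (join n b g)" unfolding span_fam_def by blast
  qed
  ultimately show ?thesis using is_basis_iff by blast
qed

lemma dual_in_subset: "dual_in \<nu> h W' M \<subseteq> W'" unfolding dual_in_def by blast

lemma lat_dual_subset: "lat_dual \<nu> h W' \<Lambda> t \<subseteq> W'" unfolding lat_dual_def using dual_in_subset by blast

lemma o_module_dual_in: "o_module (dual_in \<nu> h W' M)"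
  unfolding o_module_def dual_in_def
proof (intro conjI ballI allI impI)
  show "0 \<in> {y \<in> W'. \<forall>m\<in>M. h y m \<in> pD \<nu>}" by simp
next
  fix x y assume "x \<in> {y \<in> W'. \<forall>m\<in>M. h y m \<in> pD \<nu>}" "y \<in> {y \<in> W'. \<forall>m\<in>M. h y m \<in> pD \<nu>}"
  then show "x + y \<in> {y \<in> W'. \<forall>m\<in>M. h y m \<in> pD \<nu>}" by (auto simp: W'_add h_addL pD_add)
next
  fix x a assume x: "x \<in> {y \<in> W'. \<forall>m\<in>M. h y m \<in> pD \<nu>}" and a: "0 \<le> \<nu> a"
  have "h (sm x a) m \<in> pD \<nu>" if "m \<in> M" for m
    using x that a nu_pos_mult'[of "\<rho> a" "h x m"] unfolding h_smL pD_def by simp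
  then show "sm x a \<in> {y \<in> W'. \<forall>m\<in>M. h y m \<in> pD \<nu>}" using x W'_sm by simp
qed

lemma zero_in_lat_dual: "0 \<in> lat_dual \<nu> h W' \<Lambda> t"
  unfolding lat_dual_def dual_in_def by simp

lemma lat_dual_antimono: "r \<le> s \<Longrightarrow> lat_dual \<nu> h W' \<Lambda> s \<subseteq> lat_dual \<nu> h W' \<Lambda> r"
  unfolding lat_dual_def dual_in_def by auto

section \<open>Self-duality of \<open>\<phi>(\<Lambda>)\<close>\<close>

context
  fixes \<Lambda> :: "real \<Rightarrow> 'v set"
  assumes LF: "lattice_fun sm \<nu> \<pi> W \<Lambda>"
begin

lemma lattice_fun_full: "full_lattice sm \<nu> W (\<Lambda> r)" using LF unfolding lattice_fun_def by blast

lemma lattice_fun_shift: "\<Lambda> (r + val_pi) = (\<lambda>m. sm m \<pi>) ` \<Lambda> r" using LF unfolding lattice_fun_def val_pi_def by blast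

lemma lattice_fun_antimono: "r \<le> s \<Longrightarrow> \<Lambda> s \<subseteq> \<Lambda> r" using LF unfolding lattice_fun_def by blast

lemma lattice_fun_left_cont: "\<Lambda> r = (\<Inter>s\<in>{..<r}. \<Lambda> s)" using LF unfolding lattice_fun_def by blast

lemma lattice_fun_subset_W: "\<Lambda> r \<subseteq> W" using full_lattice_sub[OF subspace_W lattice_fun_full] .

lemma lattice_fun_basis: "\<exists>n b. is_basis sm W n b \<and> \<Lambda> r = o_lattice n b"
  using full_lattice_basis[OF subspace_W _ lattice_fun_full] exists_basis_W by blast

lemma lattice_fun_zero: "0 \<in> \<Lambda> r"
  using lattice_fun_basis[of r] o_module_o_lattice unfolding o_module_def by blast

abbreviation "Lambda_above t \<equiv> (\<Union>s\<in>{-t<..}. \<Lambda> s)"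

lemma Lambda_above_subset: "Lambda_above t \<subseteq> \<Lambda> (- t)"
proof (rule UN_least)
  fix s assume "s \<in> {- t<..}"
  then show "\<Lambda> s \<subseteq> \<Lambda> (- t)" using lattice_fun_antimono[of "- t" s] by simp
qed

text \<open>With \<open>(w\<^sub>i)\<close> dual to a basis of \<open>\<Lambda>(-t)\<close>, the module \<open>\<Lambda>\<^sup>#\<^sup>,\<^sup>W\<^sup>'(t)\<close> contains \<open>\<Oplus> w\<^sub>i p\<^sub>D\<close>, and
  pairing with \<open>b\<^sub>i \<pi> \<in> \<Lambda>(-t + \<nu>(\<pi>))\<close> bounds its coordinates below by \<open>-\<nu>(\<pi>)\<close>.\<close>

lemma lat_dual_full_lattice: "full_lattice sm \<nu> W' (lat_dual \<nu> h W' \<Lambda> t)"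
proof -
  obtain n b where b: "is_basis sm W n b" "\<Lambda> (- t) = o_lattice n b" using lattice_fun_basis by blast
  obtain w where wbasis: "is_basis sm W' n w" and dual: "dual_families n b w"
    using exists_dual_basis[OF b(1)] by blast
  have w: "\<forall>j<n. w j \<in> W'" using wbasis is_basis_iff by blast
  define X where "X = lat_dual \<nu> h W' \<Lambda> t"
  have XD: "X = dual_in \<nu> h W' (Lambda_above t)" unfolding X_def lat_dual_def by simp
  have sub1: "\<Lambda> (- t + val_pi) \<subseteq> Lambda_above t"
  proof
    fix x assume "x \<in> \<Lambda> (- t + val_pi)"
    then show "x \<in> Lambda_above t" using val_pi_pos by (intro UN_I[of "- t + val_pi"]) auto
  qed
  have "\<exists>g. is_basis sm W' n g \<and> X = o_lattice n g"
  proof (rule bounded_o_module_basis[OF subspace_W' wbasis])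
    show "o_module X" unfolding XD by (rule o_module_dual_in)
    show "X \<subseteq> W'" unfolding XD by (rule dual_in_subset)
    show "\<forall>x\<in>X. \<forall>c. x = lcomb sm n w c \<longrightarrow> (\<forall>i<n. ereal (- val_pi) \<le> \<nu> (c i))"
    proof (intro ballI allI impI)
      fix x c i assume x: "x \<in> X" and c: "x = lcomb sm n w c" and i: "i < n"
      have "h (b i) x = c i" using dual_families_lcomb_right[OF dual i] c by simp
      have "b i \<in> \<Lambda> (- t)" using b(2) o_lattice_generator[OF i, of 1 b] by simp
      then have "sm (b i) \<pi> \<in> \<Lambda> (- t + val_pi)" using lattice_fun_shift by blast
      then have "h x (sm (b i) \<pi>) \<in> pD \<nu>" using x sub1 unfolding XD dual_in_def by blast
      then have "0 < \<nu> (\<epsilon> * \<rho> (c i) * \<pi>)"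
        using h_sym[of x "b i"] \<open>h (b i) x = c i\<close> unfolding h_smR pD_def by simp
      then have "0 < \<nu> (c i) + ereal val_pi" using nu_mult nu_pi eps_nz by (simp add: nu_vr)
      then show "ereal (- val_pi) \<le> \<nu> (c i)"
        by (cases "\<nu> (c i)") (auto simp: zero_ereal_def)
    qed
    show "\<forall>i<n. \<forall>a. ereal val_pi \<le> \<nu> a \<longrightarrow> sm (w i) a \<in> X"
    proof (intro allI impI)
      fix i a assume i: "i < n" and a: "ereal val_pi \<le> \<nu> a"
      have apos: "0 < \<nu> a" using a val_pi_pos by (metis ereal_less(2) less_le_trans zero_ereal_def)
      have "h (sm (w i) a) m \<in> pD \<nu>" if "m \<in> Lambda_above t" for m
      proof -
        have "m \<in> o_lattice n b" using that Lambda_above_subset b(2) by blast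
        then obtain d where d: "m = lcomb sm n b d" "\<forall>j<n. 0 \<le> \<nu> (d j)" unfolding o_lattice_def by blast
        have "h (sm (w i) a) m = \<rho> a * (\<epsilon> * d i)" using dual_families_lcomb_sym[OF dual i] d(1) h_smL by simp
        moreover have "0 < \<nu> (\<rho> a * (\<epsilon> * d i))"
          using nu_pos_mult[of "\<rho> a" "\<epsilon> * d i"] apos d(2) i by (simp add: nu_mult)
        ultimately show ?thesis unfolding pD_def by simp
      qed
      then show "sm (w i) a \<in> X" unfolding XD dual_in_def using W'_sm w i by blast
    qed
  qed
  then obtain g where g: "is_basis sm W' n g" "X = o_lattice n g" by blast
  then show ?thesis using o_lattice_full_lattice[OF subspace_W' g(1)] X_def by simp
qed

text \<open>If \<open>w \<notin> \<Lambda>(t)\<close>, left continuity gives \<open>u < t\<close> with \<open>w \<notin> \<Lambda>(u)\<close>; a coordinate of \<open>w\<close> of negative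
  valuation in a basis of \<open>\<Lambda>(u)\<close> is detected by the scaled dual vector \<open>v\<^sub>j \<pi> \<in> \<Lambda>\<^sup>#\<^sup>,\<^sup>W\<^sup>'(-u)\<close>.\<close>

lemma lattice_fun_bidual:
  assumes w: "w \<in> W" and H: "\<And>s m'. s > - t \<Longrightarrow> m' \<in> lat_dual \<nu> h W' \<Lambda> s \<Longrightarrow> h w m' \<in> pD \<nu>"
  shows "w \<in> \<Lambda> t"
proof (rule ccontr)
  assume "w \<notin> \<Lambda> t"
  then obtain u0 where u0: "u0 < t" "w \<notin> \<Lambda> u0" using lattice_fun_left_cont[of t] by blast
  obtain n b where b: "is_basis sm W n b" "\<Lambda> u0 = o_lattice n b" using lattice_fun_basis by blast
  obtain v where v: "is_basis sm W' n v" and dual: "dual_families n b v"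
    using exists_dual_basis[OF b(1)] by blast
  obtain c where c: "w = lcomb sm n b c" using w b(1) unfolding is_basis_iff span_fam_def by blast
  obtain j where j: "j < n" "\<not> 0 \<le> \<nu> (c j)" using u0(2) b(2) c unfolding o_lattice_def by blast
  have cj: "c j \<noteq> 0" using j(2) by auto
  have "vr (c j) < 0" using j(2) nu_vr[OF cj] by (simp add: zero_ereal_def)
  then have vle: "vr (c j) \<le> - val_pi" using vr_neg_le cj by blast
  define m' where "m' = sm (v j) \<pi>"
  have "m' \<in> lat_dual \<nu> h W' \<Lambda> (- u0)"
    unfolding lat_dual_def dual_in_def
  proof (intro CollectI conjI ballI)
    show "m' \<in> W'" unfolding m'_def using W'_sm v j unfolding is_basis_iff by blast
  next
    fix m assume "m \<in> Lambda_above (- u0)"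
    then obtain s where "s > u0" "m \<in> \<Lambda> s" by auto
    then have "m \<in> \<Lambda> u0" using lattice_fun_antimono[of u0 s] by auto
    then have "m \<in> o_lattice n b" using b(2) by simp
    then obtain d where d: "m = lcomb sm n b d" "\<forall>i<n. 0 \<le> \<nu> (d i)" unfolding o_lattice_def by blast
    have "h m' m = \<rho> \<pi> * (\<epsilon> * d j)" unfolding m'_def h_smL using dual_families_lcomb_sym[OF dual j(1)] d(1) by simp
    moreover have "0 < \<nu> (\<rho> \<pi> * (\<epsilon> * d j))"
      using nu_pos_mult[of "\<rho> \<pi>" "\<epsilon> * d j"] nu_pi_pos d(2) j(1) by (simp add: nu_mult)
    ultimately show "h m' m \<in> pD \<nu>" unfolding pD_def by simp
  qed
  then have "h w m' \<in> pD \<nu>" using H[of "- u0" m'] u0(1) by simp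
  moreover have "h w m' = \<rho> (c j) * \<pi>" unfolding m'_def h_smR using dual_families_lcomb_left[OF dual j(1)] c by simp
  moreover have "\<not> 0 < \<nu> (\<rho> (c j) * \<pi>)"
    using vle cj pi_nz by (simp add: nu_vr vr_mult vr_rho vr_pi zero_ereal_def)
  ultimately show False unfolding pD_def by simp
qed

lemma phi_mem_iff:
  "x \<in> phi \<nu> h W' \<Lambda> t \<longleftrightarrow> proj1 W W' x \<in> \<Lambda> t \<and> proj2 W W' x \<in> lat_dual \<nu> h W' \<Lambda> t"
proof
  assume "x \<in> phi \<nu> h W' \<Lambda> t"
  then obtain a y where "x = a + y" "a \<in> \<Lambda> t" "y \<in> lat_dual \<nu> h W' \<Lambda> t" unfolding phi_def by blast
  moreover then have "a \<in> W" "y \<in> W'" using lattice_fun_subset_W lat_dual_subset by blast+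
  ultimately show "proj1 W W' x \<in> \<Lambda> t \<and> proj2 W W' x \<in> lat_dual \<nu> h W' \<Lambda> t"
    using proj1_eq proj2_eq by simp
next
  assume "proj1 W W' x \<in> \<Lambda> t \<and> proj2 W W' x \<in> lat_dual \<nu> h W' \<Lambda> t"
  then show "x \<in> phi \<nu> h W' \<Lambda> t" unfolding phi_def using proj_W_W'(3)[of x] by blast
qed

lemma lat_dual_phi_subset: "lat_dual \<nu> h UNIV (phi \<nu> h W' \<Lambda>) t \<subseteq> phi \<nu> h W' \<Lambda> t"
proof
  fix x assume x: "x \<in> lat_dual \<nu> h UNIV (phi \<nu> h W' \<Lambda>) t"
  then have X: "\<And>s m. s > - t \<Longrightarrow> m \<in> phi \<nu> h W' \<Lambda> s \<Longrightarrow> h x m \<in> pD \<nu>"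
    unfolding lat_dual_def dual_in_def by auto
  define a where "a = proj1 W W' x"
  define y where "y = proj2 W W' x"
  have aW: "a \<in> W" and yW: "y \<in> W'" and xa: "x = a + y" using proj_W_W' a_def y_def by auto
  have "y \<in> lat_dual \<nu> h W' \<Lambda> t"
    unfolding lat_dual_def dual_in_def
  proof (intro CollectI conjI ballI)
    show "y \<in> W'" by (rule yW)
    fix m assume "m \<in> Lambda_above t"
    then obtain s where s: "s > - t" "m \<in> \<Lambda> s" by auto
    have "m \<in> phi \<nu> h W' \<Lambda> s" unfolding phi_def using s(2) zero_in_lat_dual by force
    then have "h x m \<in> pD \<nu>" using X s(1) by blast
    moreover have "h a m = 0" using isotropic_W aW lattice_fun_subset_W s(2) by blast
    ultimately show "h y m \<in> pD \<nu>" unfolding xa h_addL by simp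
  qed
  moreover have "a \<in> \<Lambda> t"
  proof (rule lattice_fun_bidual[OF aW])
    fix s m' assume s: "s > - t" and m': "m' \<in> lat_dual \<nu> h W' \<Lambda> s"
    have "m' \<in> phi \<nu> h W' \<Lambda> s" unfolding phi_def using m' lattice_fun_zero by force
    then have "h x m' \<in> pD \<nu>" using X s by blast
    moreover have "h y m' = 0" using isotropic_W' yW lat_dual_subset m' by blast
    ultimately show "h a m' \<in> pD \<nu>" unfolding xa h_addL by simp
  qed
  ultimately show "x \<in> phi \<nu> h W' \<Lambda> t" unfolding phi_def xa by blast
qed

lemma phi_subset_lat_dual: "phi \<nu> h W' \<Lambda> t \<subseteq> lat_dual \<nu> h UNIV (phi \<nu> h W' \<Lambda>) t"
proof
  fix x assume "x \<in> phi \<nu> h W' \<Lambda> t"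
  then obtain a y where xa: "x = a + y" and a: "a \<in> \<Lambda> t" and y: "y \<in> lat_dual \<nu> h W' \<Lambda> t"
    unfolding phi_def by blast
  have aW: "a \<in> W" using a lattice_fun_subset_W by blast
  have yW: "y \<in> W'" using y lat_dual_subset by blast
  have "h x m \<in> pD \<nu>" if s: "s > - t" and m: "m \<in> phi \<nu> h W' \<Lambda> s" for s m
  proof -
    obtain a2 y2 where m2: "m = a2 + y2" "a2 \<in> \<Lambda> s" "y2 \<in> lat_dual \<nu> h W' \<Lambda> s"
      using m unfolding phi_def by blast
    have a2W: "a2 \<in> W" using m2(2) lattice_fun_subset_W by blast
    have y2W: "y2 \<in> W'" using m2(3) lat_dual_subset by blast
    have "h y a2 \<in> pD \<nu>" using y m2(2) s unfolding lat_dual_def dual_in_def by auto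
    moreover have "h y2 a \<in> pD \<nu>" using m2(3) a s unfolding lat_dual_def dual_in_def by auto
    then have "h a y2 \<in> pD \<nu>" using h_sym[of a y2] by (simp add: pD_def nu_mult nu_vr zero_ereal_def)
    moreover have "h a a2 = 0" using isotropic_W aW a2W by blast
    moreover have "h y y2 = 0" using isotropic_W' yW y2W by blast
    ultimately show ?thesis unfolding xa m2(1) h_addL h_addR by (simp add: pD_add)
  qed
  then show "x \<in> lat_dual \<nu> h UNIV (phi \<nu> h W' \<Lambda>) t" unfolding lat_dual_def dual_in_def by blast
qed

lemma lat_dual_phi: "lat_dual \<nu> h UNIV (phi \<nu> h W' \<Lambda>) t = phi \<nu> h W' \<Lambda> t"
  using lat_dual_phi_subset phi_subset_lat_dual by (rule equalityI)

lemma phi_full: "full_lattice sm \<nu> UNIV (phi \<nu> h W' \<Lambda> r)"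
proof -
  obtain n b where b: "is_basis sm W n b" "\<Lambda> r = o_lattice n b" using lattice_fun_basis by blast
  obtain m g where g: "is_basis sm W' m g" "lat_dual \<nu> h W' \<Lambda> r = o_lattice m g"
    using full_lattice_basis[OF subspace_W' _ lat_dual_full_lattice] exists_basis_W' by blast
  have "phi \<nu> h W' \<Lambda> r = o_lattice (n + m) (join n b g)"
    unfolding o_lattice_join phi_def b(2) g(2) by simp
  moreover have sub: "subspace_r sm (UNIV :: 'v set)" unfolding subspace_r_def by simp
  ultimately show ?thesis using o_lattice_full_lattice[OF sub join_basis[OF b(1) g(1)]] by simp
qed

lemma Lambda_above_shift: "m \<in> Lambda_above (r + val_pi) \<longleftrightarrow> sm m \<pi> \<in> Lambda_above r"
proof
  assume "m \<in> Lambda_above (r + val_pi)"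
  then obtain s where s: "s > - (r + val_pi)" "m \<in> \<Lambda> s" by auto
  then have "sm m \<pi> \<in> \<Lambda> (s + val_pi)" using lattice_fun_shift by blast
  moreover have "s + val_pi > - r" using s(1) by simp
  ultimately show "sm m \<pi> \<in> Lambda_above r" by auto
next
  assume "sm m \<pi> \<in> Lambda_above r"
  then obtain s where s: "s > - r" "sm m \<pi> \<in> \<Lambda> s" by auto
  have "\<Lambda> s = (\<lambda>m. sm m \<pi>) ` \<Lambda> (s - val_pi)" using lattice_fun_shift[of "s - val_pi"] by simp
  then obtain m2 where m2: "m2 \<in> \<Lambda> (s - val_pi)" "sm m \<pi> = sm m2 \<pi>" using s(2) by auto
  then have "sm (sm m \<pi>) (inverse \<pi>) = sm (sm m2 \<pi>) (inverse \<pi>)" by simp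
  then have "m = m2" unfolding sm_inv[OF pi_nz] .
  moreover have "s - val_pi > - (r + val_pi)" using s(1) by simp
  ultimately show "m \<in> Lambda_above (r + val_pi)" using m2(1) by auto
qed

lemma lat_dual_shift_iff:
  assumes yW: "y \<in> W'"
  shows "y \<in> lat_dual \<nu> h W' \<Lambda> (r + val_pi) \<longleftrightarrow> sm y (inverse \<pi>) \<in> lat_dual \<nu> h W' \<Lambda> r"
proof -
  have "y \<in> lat_dual \<nu> h W' \<Lambda> (r + val_pi) \<longleftrightarrow> (\<forall>m. m \<in> Lambda_above (r + val_pi) \<longrightarrow> 0 < \<nu> (h y m))"
    unfolding lat_dual_def dual_in_def pD_def using yW by auto
  also have "\<dots> \<longleftrightarrow> (\<forall>m'. m' \<in> Lambda_above r \<longrightarrow> 0 < \<nu> (h (sm y (inverse \<pi>)) m'))"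
  proof
    assume A: "\<forall>m. m \<in> Lambda_above (r + val_pi) \<longrightarrow> 0 < \<nu> (h y m)"
    show "\<forall>m'. m' \<in> Lambda_above r \<longrightarrow> 0 < \<nu> (h (sm y (inverse \<pi>)) m')"
    proof (intro allI impI)
      fix m' assume m': "m' \<in> Lambda_above r"
      define m where "m = sm m' (inverse \<pi>)"
      have mm: "sm m \<pi> = m'" unfolding m_def by (simp flip: sm_mult add: pi_nz)
      then have "m \<in> Lambda_above (r + val_pi)" using Lambda_above_shift m' by simp
      then have "0 < \<nu> (h y m)" using A by blast
      moreover have "h (sm y (inverse \<pi>)) m' = \<rho> (inverse \<pi>) * h y m * \<pi>"
        unfolding h_smL mm[symmetric] h_smR by (simp add: mult.assoc)
      ultimately show "0 < \<nu> (h (sm y (inverse \<pi>)) m')" using nu_conj_pi by simp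
    qed
  next
    assume B: "\<forall>m'. m' \<in> Lambda_above r \<longrightarrow> 0 < \<nu> (h (sm y (inverse \<pi>)) m')"
    show "\<forall>m. m \<in> Lambda_above (r + val_pi) \<longrightarrow> 0 < \<nu> (h y m)"
    proof (intro allI impI)
      fix m assume "m \<in> Lambda_above (r + val_pi)"
      then have "sm m \<pi> \<in> Lambda_above r" using Lambda_above_shift by simp
      then have "0 < \<nu> (h (sm y (inverse \<pi>)) (sm m \<pi>))" using B by blast
      moreover have "h (sm y (inverse \<pi>)) (sm m \<pi>) = \<rho> (inverse \<pi>) * h y m * \<pi>"
        unfolding h_smL h_smR by (simp add: mult.assoc)
      ultimately show "0 < \<nu> (h y m)" using nu_conj_pi by simp
    qed
  qed
  also have "\<dots> \<longleftrightarrow> sm y (inverse \<pi>) \<in> lat_dual \<nu> h W' \<Lambda> r"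
    unfolding lat_dual_def dual_in_def pD_def using W'_sm[OF yW] by auto
  finally show ?thesis .
qed

lemma lat_dual_shift: "lat_dual \<nu> h W' \<Lambda> (r + val_pi) = (\<lambda>m. sm m \<pi>) ` lat_dual \<nu> h W' \<Lambda> r"
proof
  show "lat_dual \<nu> h W' \<Lambda> (r + val_pi) \<subseteq> (\<lambda>m. sm m \<pi>) ` lat_dual \<nu> h W' \<Lambda> r"
  proof
    fix y assume y: "y \<in> lat_dual \<nu> h W' \<Lambda> (r + val_pi)"
    then have yW: "y \<in> W'" using lat_dual_subset by blast
    then have "sm y (inverse \<pi>) \<in> lat_dual \<nu> h W' \<Lambda> r" using lat_dual_shift_iff yW y by blast
    moreover have "y = sm (sm y (inverse \<pi>)) \<pi>" by (simp flip: sm_mult add: pi_nz)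
    ultimately show "y \<in> (\<lambda>m. sm m \<pi>) ` lat_dual \<nu> h W' \<Lambda> r" by blast
  qed
next
  show "(\<lambda>m. sm m \<pi>) ` lat_dual \<nu> h W' \<Lambda> r \<subseteq> lat_dual \<nu> h W' \<Lambda> (r + val_pi)"
  proof
    fix y assume "y \<in> (\<lambda>m. sm m \<pi>) ` lat_dual \<nu> h W' \<Lambda> r"
    then obtain z where z: "z \<in> lat_dual \<nu> h W' \<Lambda> r" "y = sm z \<pi>" by blast
    have zW: "z \<in> W'" using z(1) lat_dual_subset by blast
    have yW: "y \<in> W'" using z(2) W'_sm[OF zW] by simp
    have "sm y (inverse \<pi>) = z" using z(2) sm_inv[OF pi_nz] by simp
    then show "y \<in> lat_dual \<nu> h W' \<Lambda> (r + val_pi)" using lat_dual_shift_iff[OF yW] z(1) by simp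
  qed
qed

lemma phi_shift: "phi \<nu> h W' \<Lambda> (r + val_pi) = (\<lambda>m. sm m \<pi>) ` phi \<nu> h W' \<Lambda> r"
proof
  show "phi \<nu> h W' \<Lambda> (r + val_pi) \<subseteq> (\<lambda>m. sm m \<pi>) ` phi \<nu> h W' \<Lambda> r"
  proof
    fix x assume "x \<in> phi \<nu> h W' \<Lambda> (r + val_pi)"
    then obtain a y where x: "x = a + y" "a \<in> \<Lambda> (r + val_pi)" "y \<in> lat_dual \<nu> h W' \<Lambda> (r + val_pi)"
      unfolding phi_def by blast
    obtain a0 where a0: "a0 \<in> \<Lambda> r" "a = sm a0 \<pi>" using x(2) lattice_fun_shift by blast
    obtain y0 where y0: "y0 \<in> lat_dual \<nu> h W' \<Lambda> r" "y = sm y0 \<pi>" using x(3) lat_dual_shift by blast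
    have "x = sm (a0 + y0) \<pi>" using x(1) a0(2) y0(2) sm_addL by simp
    moreover have "a0 + y0 \<in> phi \<nu> h W' \<Lambda> r" unfolding phi_def using a0(1) y0(1) by blast
    ultimately show "x \<in> (\<lambda>m. sm m \<pi>) ` phi \<nu> h W' \<Lambda> r" by blast
  qed
next
  show "(\<lambda>m. sm m \<pi>) ` phi \<nu> h W' \<Lambda> r \<subseteq> phi \<nu> h W' \<Lambda> (r + val_pi)"
  proof
    fix x assume "x \<in> (\<lambda>m. sm m \<pi>) ` phi \<nu> h W' \<Lambda> r"
    then obtain a y where x: "x = sm (a + y) \<pi>" "a \<in> \<Lambda> r" "y \<in> lat_dual \<nu> h W' \<Lambda> r"
      unfolding phi_def by blast
    have "sm a \<pi> \<in> \<Lambda> (r + val_pi)" using x(2) lattice_fun_shift by blast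
    moreover have "sm y \<pi> \<in> lat_dual \<nu> h W' \<Lambda> (r + val_pi)" using x(3) lat_dual_shift by blast
    moreover have "x = sm a \<pi> + sm y \<pi>" using x(1) sm_addL by simp
    ultimately show "x \<in> phi \<nu> h W' \<Lambda> (r + val_pi)" unfolding phi_def by blast
  qed
qed

lemma phi_antimono: "r \<le> s \<Longrightarrow> phi \<nu> h W' \<Lambda> s \<subseteq> phi \<nu> h W' \<Lambda> r"
  unfolding phi_def using lattice_fun_antimono lat_dual_antimono by blast

lemma phi_left_cont: "phi \<nu> h W' \<Lambda> r = (\<Inter>s\<in>{..<r}. phi \<nu> h W' \<Lambda> s)"
proof
  show "phi \<nu> h W' \<Lambda> r \<subseteq> (\<Inter>s\<in>{..<r}. phi \<nu> h W' \<Lambda> s)"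
  proof (rule INT_greatest)
    fix s assume "s \<in> {..<r}"
    then show "phi \<nu> h W' \<Lambda> r \<subseteq> phi \<nu> h W' \<Lambda> s" using phi_antimono[of s r] by simp
  qed
next
  show "(\<Inter>s\<in>{..<r}. phi \<nu> h W' \<Lambda> s) \<subseteq> phi \<nu> h W' \<Lambda> r"
  proof
    fix x assume x: "x \<in> (\<Inter>s\<in>{..<r}. phi \<nu> h W' \<Lambda> s)"
    then have x': "\<And>s. s < r \<Longrightarrow> proj1 W W' x \<in> \<Lambda> s \<and> proj2 W W' x \<in> lat_dual \<nu> h W' \<Lambda> s"
      using phi_mem_iff by blast
    have "proj1 W W' x \<in> \<Lambda> r" using x' lattice_fun_left_cont[of r] by blast
    moreover have "proj2 W W' x \<in> lat_dual \<nu> h W' \<Lambda> r"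
      unfolding lat_dual_def dual_in_def
    proof (intro CollectI conjI ballI)
      show "proj2 W W' x \<in> W'" by (rule proj_W_W')
      fix m assume "m \<in> Lambda_above r"
      then obtain u where u: "u > - r" "m \<in> \<Lambda> u" by auto
      define s where "s = (r - u) / 2"
      have "s < r" "u > - s" using u(1) s_def by auto
      then have "proj2 W W' x \<in> lat_dual \<nu> h W' \<Lambda> s" using x' by blast
      then show "h (proj2 W W' x) m \<in> pD \<nu>" using u(2) \<open>u > - s\<close> unfolding lat_dual_def dual_in_def by auto
    qed
    ultimately show "x \<in> phi \<nu> h W' \<Lambda> r" using phi_mem_iff by blast
  qed
qed

lemma phi_self_dual: "self_dual_lattice_fun sm \<nu> \<pi> h (phi \<nu> h W' \<Lambda>)"
proof -
  have "lattice_fun sm \<nu> \<pi> UNIV (phi \<nu> h W' \<Lambda>)"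
    unfolding lattice_fun_def
  proof (intro conjI allI impI)
    fix r show "full_lattice sm \<nu> UNIV (phi \<nu> h W' \<Lambda> r)" by (rule phi_full)
  next
    fix r show "phi \<nu> h W' \<Lambda> (r + real_of_ereal (\<nu> \<pi>)) = (\<lambda>m. sm m \<pi>) ` phi \<nu> h W' \<Lambda> r"
      using phi_shift[of r] unfolding val_pi_def .
  next
    fix r s :: real assume "r \<le> s" then show "phi \<nu> h W' \<Lambda> s \<subseteq> phi \<nu> h W' \<Lambda> r" by (rule phi_antimono)
  next
    fix r show "phi \<nu> h W' \<Lambda> r = (\<Inter>s\<in>{..<r}. phi \<nu> h W' \<Lambda> s)" by (rule phi_left_cont)
  qed
  moreover have "lat_dual \<nu> h UNIV (phi \<nu> h W' \<Lambda>) = phi \<nu> h W' \<Lambda>"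
    by (rule ext) (rule lat_dual_phi)
  ultimately show ?thesis unfolding self_dual_lattice_fun_def by blast
qed

end

section \<open>Affine structure\<close>

lemma dual_lcomb_pD_coeff_bound:
  assumes dual: "dual_families n w2 v" and sp: "splits sm \<nu> n v \<alpha> \<Lambda>"
    and A: "\<forall>m\<in>(\<Union>s\<in>{-x<..}. \<Lambda> s). h (lcomb sm n w2 c) m \<in> pD \<nu>" and i: "i < n"
  shows "ereal (x + \<alpha> i) \<le> \<nu> (c i)"
proof (rule ccontr)
  assume i2: "\<not> ereal (x + \<alpha> i) \<le> \<nu> (c i)"
  have spl: "\<And>s. \<Lambda> s = {lcomb sm n v \<gamma> | \<gamma>. \<forall>i<n. ereal (s - \<alpha> i) \<le> \<nu> (\<gamma> i)}"
    using sp splits_lcomb by blast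
  have hc: "h (lcomb sm n w2 c) (lcomb sm n v \<gamma>) = (\<Sum>i<n. \<rho> (c i) * \<gamma> i)" for \<gamma>
    unfolding h_lcombR using dual_families_lcomb_left[OF dual] by simp
  have ci: "c i \<noteq> 0" using i2 by auto
  have vci: "vr (c i) < x + \<alpha> i" using i2 nu_vr[OF ci] by simp
  define s where "s = \<alpha> i - vr (c i)"
  define \<gamma> where "\<gamma> = (\<lambda>j. if j = i then inverse (\<rho> (c i)) else 0)"
  have "lcomb sm n v \<gamma> \<in> \<Lambda> s"
    unfolding spl
  proof (intro CollectI exI conjI allI impI)
    show "lcomb sm n v \<gamma> = lcomb sm n v \<gamma>" ..
    fix j assume "j < n"
    show "ereal (s - \<alpha> j) \<le> \<nu> (\<gamma> j)"
    proof (cases "j = i")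
      case True
      then show ?thesis unfolding \<gamma>_def s_def using ci
        by (simp add: nu_vr vr_inverse vr_rho)
    qed (simp add: \<gamma>_def)
  qed
  moreover have "s > - x" unfolding s_def using vci by simp
  ultimately have "h (lcomb sm n w2 c) (lcomb sm n v \<gamma>) \<in> pD \<nu>" using A by blast
  moreover have "(\<Sum>j<n. \<rho> (c j) * \<gamma> j) = 1"
  proof -
    have "(\<Sum>j<n. \<rho> (c j) * \<gamma> j) = (\<Sum>j<n. if j = i then 1 else 0)"
      by (rule sum.cong) (use ci in \<open>auto simp: \<gamma>_def\<close>)
    then show ?thesis using i by simp
  qed
  ultimately show False unfolding hc pD_def by simp
qed

lemma dual_lcomb_pD_iff:
  assumes dual: "dual_families n w2 v" and sp: "splits sm \<nu> n v \<alpha> \<Lambda>"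
  shows "(\<forall>m\<in>(\<Union>s\<in>{-x<..}. \<Lambda> s). h (lcomb sm n w2 c) m \<in> pD \<nu>)
    \<longleftrightarrow> (\<forall>i<n. ereal (x + \<alpha> i) \<le> \<nu> (c i))"
proof -
  have spl: "\<And>s. \<Lambda> s = {lcomb sm n v \<gamma> | \<gamma>. \<forall>i<n. ereal (s - \<alpha> i) \<le> \<nu> (\<gamma> i)}"
    using sp splits_lcomb by blast
  have hc: "h (lcomb sm n w2 c) (lcomb sm n v \<gamma>) = (\<Sum>i<n. \<rho> (c i) * \<gamma> i)" for \<gamma>
    unfolding h_lcombR using dual_families_lcomb_left[OF dual] by simp
  show ?thesis
  proof
    assume "\<forall>m\<in>(\<Union>s\<in>{-x<..}. \<Lambda> s). h (lcomb sm n w2 c) m \<in> pD \<nu>"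
    then show "\<forall>i<n. ereal (x + \<alpha> i) \<le> \<nu> (c i)" using dual_lcomb_pD_coeff_bound[OF dual sp] by blast
  next
    assume B: "\<forall>i<n. ereal (x + \<alpha> i) \<le> \<nu> (c i)"
    show "\<forall>m\<in>(\<Union>s\<in>{-x<..}. \<Lambda> s). h (lcomb sm n w2 c) m \<in> pD \<nu>"
    proof
      fix m assume "m \<in> (\<Union>s\<in>{-x<..}. \<Lambda> s)"
      then obtain s \<gamma> where s: "s > - x" "m = lcomb sm n v \<gamma>" "\<forall>i<n. ereal (s - \<alpha> i) \<le> \<nu> (\<gamma> i)"
        unfolding spl by auto
      have "\<rho> (c i) * \<gamma> i \<in> pD \<nu>" if i: "i \<in> {..<n}" for i
      proof -
        have "ereal (x + \<alpha> i) + ereal (s - \<alpha> i) \<le> \<nu> (\<rho> (c i)) + \<nu> (\<gamma> i)"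
          using B s(3) i by (intro add_mono) auto
        moreover have "ereal (x + \<alpha> i) + ereal (s - \<alpha> i) > 0" using s(1) by (simp add: zero_ereal_def)
        ultimately show ?thesis unfolding pD_iff nu_mult by (meson less_le_trans)
      qed
      then show "h (lcomb sm n w2 c) m \<in> pD \<nu>" unfolding s(2) hc by (rule pD_sum)
    qed
  qed
qed

lemma lat_dual_splits:
  assumes w2: "is_basis sm W' n w2" and dual: "dual_families n w2 v" and sp: "splits sm \<nu> n v \<alpha> \<Lambda>"
  shows "lat_dual \<nu> h W' \<Lambda> x = {lcomb sm n w2 \<delta> | \<delta>. \<forall>i<n. ereal (x - (- \<alpha> i)) \<le> \<nu> (\<delta> i)}"
proof -
  have w2W: "\<And>j. j < n \<Longrightarrow> w2 j \<in> W'" and w2s: "W' \<subseteq> span_fam sm n w2"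
    using w2 is_basis_iff by auto
  note cond = dual_lcomb_pD_iff[OF dual sp]
  show ?thesis
  proof
    show "lat_dual \<nu> h W' \<Lambda> x \<subseteq> {lcomb sm n w2 \<delta> | \<delta>. \<forall>i<n. ereal (x - (- \<alpha> i)) \<le> \<nu> (\<delta> i)}"
    proof
      fix y assume y: "y \<in> lat_dual \<nu> h W' \<Lambda> x"
      then have yW: "y \<in> W'" using lat_dual_subset by blast
      then obtain c where c: "y = lcomb sm n w2 c" using w2s unfolding span_fam_def by blast
      have "\<forall>m\<in>(\<Union>s\<in>{-x<..}. \<Lambda> s). h (lcomb sm n w2 c) m \<in> pD \<nu>"
        using y c unfolding lat_dual_def dual_in_def by blast
      then have "\<forall>i<n. ereal (x + \<alpha> i) \<le> \<nu> (c i)" using cond by blast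
      then show "y \<in> {lcomb sm n w2 \<delta> | \<delta>. \<forall>i<n. ereal (x - (- \<alpha> i)) \<le> \<nu> (\<delta> i)}" using c by auto
    qed
  next
    show "{lcomb sm n w2 \<delta> | \<delta>. \<forall>i<n. ereal (x - (- \<alpha> i)) \<le> \<nu> (\<delta> i)} \<subseteq> lat_dual \<nu> h W' \<Lambda> x"
    proof
      fix y assume "y \<in> {lcomb sm n w2 \<delta> | \<delta>. \<forall>i<n. ereal (x - (- \<alpha> i)) \<le> \<nu> (\<delta> i)}"
      then obtain c where c: "y = lcomb sm n w2 c" "\<forall>i<n. ereal (x + \<alpha> i) \<le> \<nu> (c i)" by auto
      have "y \<in> W'" using c(1) W'_lcomb w2W by blast
      moreover have "\<forall>m\<in>(\<Union>s\<in>{-x<..}. \<Lambda> s). h y m \<in> pD \<nu>" using cond c by blast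
      ultimately show "y \<in> lat_dual \<nu> h W' \<Lambda> x" unfolding lat_dual_def dual_in_def by blast
    qed
  qed
qed

lemma phi_splits:
  assumes w2: "is_basis sm W' n w2" and dual: "dual_families n w2 v" and sp: "splits sm \<nu> n v \<alpha> \<Lambda>"
  shows "splits sm \<nu> (n + n) (join n v w2) (\<lambda>i. if i < n then \<alpha> i else - \<alpha> (i - n)) (phi \<nu> h W' \<Lambda>)"
proof -
  have "splits sm \<nu> n w2 (\<lambda>i. - \<alpha> i) (lat_dual \<nu> h W' \<Lambda>)"
    unfolding splits_lcomb using lat_dual_splits[OF w2 dual sp] by simp
  from splits_join[OF sp this] show ?thesis unfolding phi_def by (simp add: fun_eq_iff)
qed

lemma phi_affine_comb:
  assumes "affine_comb sm \<nu> W t \<Lambda> \<Lambda>' M"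
  shows "affine_comb sm \<nu> UNIV t (phi \<nu> h W' \<Lambda>) (phi \<nu> h W' \<Lambda>') (phi \<nu> h W' M)"
proof -
  obtain n v \<alpha> \<alpha>' where v: "is_basis sm W n v" and s1: "splits sm \<nu> n v \<alpha> \<Lambda>"
    and s2: "splits sm \<nu> n v \<alpha>' \<Lambda>'" and s3: "splits sm \<nu> n v (\<lambda>i. t * \<alpha> i + (1 - t) * \<alpha>' i) M"
    using assms unfolding affine_comb_def by blast
  obtain w2 where w2: "is_basis sm W' n w2" "dual_families n w2 v"
    using exists_dual_basis_W'[OF v] by blast
  define \<beta> where "\<beta> = (\<lambda>i. if i < n then \<alpha> i else - \<alpha> (i - n))"
  define \<beta>' where "\<beta>' = (\<lambda>i. if i < n then \<alpha>' i else - \<alpha>' (i - n))"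
  have "splits sm \<nu> (n + n) (join n v w2) \<beta> (phi \<nu> h W' \<Lambda>)"
    unfolding \<beta>_def by (rule phi_splits[OF w2 s1])
  moreover have "splits sm \<nu> (n + n) (join n v w2) \<beta>' (phi \<nu> h W' \<Lambda>')"
    unfolding \<beta>'_def by (rule phi_splits[OF w2 s2])
  moreover have "splits sm \<nu> (n + n) (join n v w2) (\<lambda>i. t * \<beta> i + (1 - t) * \<beta>' i) (phi \<nu> h W' M)"
  proof -
    have "(\<lambda>i. t * \<beta> i + (1 - t) * \<beta>' i) =
      (\<lambda>i. if i < n then t * \<alpha> i + (1 - t) * \<alpha>' i else - (t * \<alpha> (i - n) + (1 - t) * \<alpha>' (i - n)))"
      unfolding \<beta>_def \<beta>'_def by (auto simp: fun_eq_iff algebra_simps)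
    then show ?thesis using phi_splits[OF w2 s3] by simp
  qed
  moreover have "is_basis sm UNIV (n + n) (join n v w2)" by (rule join_basis[OF v w2(1)])
  ultimately show ?thesis unfolding affine_comb_def by blast
qed

section \<open>Equivariance\<close>

lemma right_linear_on_lcomb:
  assumes a: "right_linear_on sm W a" and u: "\<And>i. i < n \<Longrightarrow> u i \<in> W"
  shows "a (lcomb sm n u c) = lcomb sm n (a \<circ> u) c"
  using u
proof (induction n)
  case 0
  have "a 0 = a 0 + a 0" using a W_0 unfolding right_linear_on_def by (metis add_0)
  then show ?case by simp
next
  case (Suc n)
  have "lcomb sm n u c \<in> W" "sm (u n) (c n) \<in> W" using W_lcomb W_sm Suc.prems by simp_all
  then show ?case using Suc a unfolding right_linear_on_def by (simp add: lcomb_Suc)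
qed

lemma GL_on_inv_into:
  assumes g: "g \<in> GL_on sm W"
  shows "inv_into W g \<in> GL_on sm W"
proof -
  have lin: "right_linear_on sm W g" and bij: "bij_betw g W W" using g unfolding GL_on_def by auto
  let ?f = "inv_into W g"
  have f: "?f x \<in> W" "g (?f x) = x" if "x \<in> W" for x
    using bij that by (auto simp: bij_betw_def inv_into_into f_inv_into_f)
  have f_eq: "?f x = x'" if "x' \<in> W" "g x' = x" for x x'
    using bij that by (auto simp: bij_betw_def inv_into_f_eq)
  have "right_linear_on sm W ?f"
    unfolding right_linear_on_def
  proof (intro conjI ballI allI)
    fix x y assume "x \<in> W" "y \<in> W"
    then show "?f (x + y) = ?f x + ?f y"
      using lin f by (intro f_eq) (auto simp: right_linear_on_def W_add)
  next
    fix x a assume "x \<in> W"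
    then show "?f (sm x a) = sm (?f x) a"
      using lin f by (intro f_eq) (auto simp: right_linear_on_def W_sm)
  qed (use f in blast)
  then show ?thesis using bij_betw_inv_into[OF bij] unfolding GL_on_def by blast
qed

lemma adjoint_W'_exists:
  assumes a: "right_linear_on sm W a"
  shows "\<exists>B. (\<forall>y. B y \<in> W') \<and> (\<forall>x y. h (a (proj1 W W' x)) y = h x (B y))"
proof -
  obtain n v where v: "is_basis sm W n v" using exists_basis_W by blast
  obtain w where w: "is_basis sm W' n w" and dual: "dual_families n v w"
    using exists_dual_basis[OF v] by blast
  have vW: "\<And>i. i < n \<Longrightarrow> v i \<in> W" and vs: "W \<subseteq> span_fam sm n v" and wW: "\<forall>j<n. w j \<in> W'"
    using v w is_basis_iff by auto
  define B where "B = (\<lambda>y. lcomb sm n w (\<lambda>j. h (a (v j)) y))"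
  have BW: "B y \<in> W'" for y unfolding B_def using W'_lcomb wW by blast
  have "h (a (proj1 W W' x)) y = h x (B y)" for x y
  proof -
    obtain c where c: "proj1 W W' x = lcomb sm n v c"
      using vs proj_W_W'(1) unfolding span_fam_def by blast
    have "h x (B y) = h (proj1 W W' x) (B y) + h (proj2 W W' x) (B y)"
      using proj_W_W'(3)[of x] h_addL by metis
    also have "h (proj2 W W' x) (B y) = 0" using isotropic_W'[OF proj_W_W'(2) BW] .
    also have "h (proj1 W W' x) (B y) = (\<Sum>i<n. \<rho> (c i) * h (a (v i)) y)"
      unfolding c h_lcombL B_def using dual_families_lcomb_right[OF dual] by simp
    also have "\<dots> = h (a (proj1 W W' x)) y"
    proof -
      have "a (lcomb sm n v c) = lcomb sm n (a \<circ> v) c" by (rule right_linear_on_lcomb[OF a vW])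
      then show ?thesis unfolding c by (simp add: h_lcombL)
    qed
    finally show ?thesis by simp
  qed
  then show ?thesis using BW by blast
qed

lemma sigma_W'_adjoint:
  assumes a: "right_linear_on sm W a"
  shows "sigma_W' h W W' a y \<in> W'" and "h (a (proj1 W W' x)) y = h x (sigma_W' h W W' a y)"
proof -
  obtain B where BW: "\<forall>y. B y \<in> W'" and B: "\<forall>x y. h (a (proj1 W W' x)) y = h x (B y)"
    using adjoint_W'_exists[OF a] by blast
  have "sigma_W' h W W' a = B"
    unfolding sigma_W'_def adj_def
  proof (rule the_equality)
    fix b assume b: "\<forall>x y. h (a (proj1 W W' x)) y = h x (b y)"
    show "b = B"
    proof
      fix y
      have "h x (b y - B y) = 0" for x using b B by (simp add: h_diffR)
      then show "b y = B y" using nondeg_right[of "b y - B y"] by simp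
    qed
  qed (use B in blast)
  then show "sigma_W' h W W' a y \<in> W'" "h (a (proj1 W W' x)) y = h x (sigma_W' h W W' a y)"
    using BW B by simp_all
qed

lemma h_sigma_W':
  assumes a: "right_linear_on sm W a" and m: "m \<in> W"
  shows "h y (a m) = h (sigma_W' h W W' a y) m"
proof -
  have "h y (a m) = \<epsilon> * \<rho> (h (a m) y)" by (rule h_sym)
  also have "h (a m) y = h m (sigma_W' h W W' a y)"
    using sigma_W'_adjoint(2)[OF a, of m y] proj1_W[OF m] by simp
  also have "\<epsilon> * \<rho> (h m (sigma_W' h W W' a y)) = h (sigma_W' h W W' a y) m"
    using h_sym[of "sigma_W' h W W' a y" m] by simp
  finally show ?thesis .
qed

text \<open>The inverse of \<open>g\<^sup>\<sigma>\<^sup>,\<^sup>W\<^sup>'\<close> is the adjoint of \<open>g\<^sup>-\<^sup>1\<close>; in particular it is a bijection of \<open>W'\<close>.\<close>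

lemma sigma_W'_bij:
  assumes g: "g \<in> GL_on sm W"
  shows "bij_betw (sigma_W' h W W' g) W' W'"
proof -
  let ?\<sigma> = "sigma_W' h W W' g" and ?f = "inv_into W g"
  have lin: "right_linear_on sm W g" and bij: "bij_betw g W W" using g unfolding GL_on_def by auto
  have lin_f: "right_linear_on sm W ?f" using GL_on_inv_into[OF g] unfolding GL_on_def by blast
  have fg: "?f (g m) = m" and gf: "g (?f m) = m" and fW: "?f m \<in> W" and gW: "g m \<in> W"
    if "m \<in> W" for m
    using bij that by (auto simp: bij_betw_def inv_into_f_f f_inv_into_f inv_into_into)
  have eq_if_pairing: "y1 = y2" if y: "y1 \<in> W'" "y2 \<in> W'" "\<And>m. m \<in> W \<Longrightarrow> h y1 m = h y2 m" for y1 y2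
  proof -
    have "y1 - y2 = 0"
    proof (rule W'_separated)
      show "y1 - y2 \<in> W'" using W'_diff y(1,2) .
      fix x assume "x \<in> W"
      then show "h x (y1 - y2) = 0" using y(3)[of x] h_zero_sym[of x] by (simp add: h_diffL)
    qed
    then show ?thesis by simp
  qed
  have "inj_on ?\<sigma> W'"
  proof (rule inj_onI)
    fix y1 y2 assume y: "y1 \<in> W'" "y2 \<in> W'" "?\<sigma> y1 = ?\<sigma> y2"
    show "y1 = y2"
    proof (rule eq_if_pairing[OF y(1,2)])
      fix m assume "m \<in> W"
      then show "h y1 m = h y2 m" using h_sigma_W'[OF lin fW] gf y(3) by metis
    qed
  qed
  moreover have "z \<in> ?\<sigma> ` W'" if z: "z \<in> W'" for z
  proof -
    let ?y = "sigma_W' h W W' ?f z"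
    have "?\<sigma> ?y = z"
    proof (rule eq_if_pairing)
      fix m assume m: "m \<in> W"
      have "h (?\<sigma> ?y) m = h ?y (g m)" using h_sigma_W'[OF lin m] by simp
      also have "\<dots> = h z (?f (g m))" using h_sigma_W'[OF lin_f gW[OF m]] by simp
      finally show "h (?\<sigma> ?y) m = h z m" using fg[OF m] by simp
    qed (use z sigma_W'_adjoint(1)[OF lin] in auto)
    moreover have "?y \<in> W'" by (rule sigma_W'_adjoint(1)[OF lin_f])
    ultimately show ?thesis by (metis image_eqI)
  qed
  moreover have "?\<sigma> ` W' \<subseteq> W'" using sigma_W'_adjoint(1)[OF lin] by blast
  ultimately show ?thesis unfolding bij_betw_def by blast
qed

lemma lat_dual_act:
  assumes g: "g \<in> GL_on sm W" and \<Lambda>W: "\<And>r. \<Lambda> r \<subseteq> W"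
  shows "lat_dual \<nu> h W' (act g \<Lambda>) t = inv_into W' (sigma_W' h W W' g) ` lat_dual \<nu> h W' \<Lambda> t"
proof -
  let ?\<sigma> = "sigma_W' h W W' g"
  have lin: "right_linear_on sm W g" using g unfolding GL_on_def by blast
  have bij: "bij_betw ?\<sigma> W' W'" by (rule sigma_W'_bij[OF g])
  have mem: "y \<in> lat_dual \<nu> h W' (act g \<Lambda>) t \<longleftrightarrow> y \<in> W' \<and> ?\<sigma> y \<in> lat_dual \<nu> h W' \<Lambda> t" for y
  proof -
    have "y \<in> lat_dual \<nu> h W' (act g \<Lambda>) t \<longleftrightarrow> y \<in> W' \<and> (\<forall>s>-t. \<forall>m\<in>\<Lambda> s. h y (g m) \<in> pD \<nu>)"
      unfolding lat_dual_def dual_in_def act_def by auto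
    also have "\<dots> \<longleftrightarrow> y \<in> W' \<and> (\<forall>s>-t. \<forall>m\<in>\<Lambda> s. h (?\<sigma> y) m \<in> pD \<nu>)"
    proof -
      have "h y (g m) = h (?\<sigma> y) m" if "m \<in> \<Lambda> s" for s m
        using h_sigma_W'[OF lin] \<Lambda>W that by blast
      then show ?thesis by simp
    qed
    also have "\<dots> \<longleftrightarrow> y \<in> W' \<and> ?\<sigma> y \<in> lat_dual \<nu> h W' \<Lambda> t"
      unfolding lat_dual_def dual_in_def using sigma_W'_adjoint(1)[OF lin] by auto
    finally show ?thesis .
  qed
  show ?thesis
  proof (intro equalityI subsetI)
    fix y assume "y \<in> lat_dual \<nu> h W' (act g \<Lambda>) t"
    then have y: "y \<in> W'" "?\<sigma> y \<in> lat_dual \<nu> h W' \<Lambda> t" using mem by blast+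
    have "inv_into W' ?\<sigma> (?\<sigma> y) = y" using bij y(1) by (simp add: bij_betw_def inv_into_f_f)
    then show "y \<in> inv_into W' ?\<sigma> ` lat_dual \<nu> h W' \<Lambda> t" using y(2) by (metis image_eqI)
  next
    fix y assume "y \<in> inv_into W' ?\<sigma> ` lat_dual \<nu> h W' \<Lambda> t"
    then obtain z where z: "z \<in> lat_dual \<nu> h W' \<Lambda> t" "y = inv_into W' ?\<sigma> z" by blast
    have "z \<in> W'" using z(1) lat_dual_subset by blast
    then have "y \<in> W'" "?\<sigma> y = z" using z(2) bij by (auto simp: bij_betw_def inv_into_into f_inv_into_f)
    then show "y \<in> lat_dual \<nu> h W' (act g \<Lambda>) t" using mem z(1) by blast
  qed
qed

lemma phi_act:
  assumes g: "g \<in> GL_on sm W" and \<Lambda>W: "\<And>r. \<Lambda> r \<subseteq> W"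
  shows "phi \<nu> h W' (act g \<Lambda>) = act (i_WW' h W W' g) (phi \<nu> h W' \<Lambda>)"
proof
  fix t
  let ?\<tau> = "inv_into W' (sigma_W' h W W' g)"
  have i_WW': "i_WW' h W W' g (a + y) = g a + ?\<tau> y" if "a \<in> \<Lambda> t" "y \<in> lat_dual \<nu> h W' \<Lambda> t" for a y
  proof -
    have "a \<in> W" "y \<in> W'" using that \<Lambda>W lat_dual_subset by blast+
    then show ?thesis unfolding i_WW'_def using proj1_eq proj2_eq by simp
  qed
  have dual: "lat_dual \<nu> h W' (act g \<Lambda>) t = ?\<tau> ` lat_dual \<nu> h W' \<Lambda> t" by (rule lat_dual_act[OF g \<Lambda>W])
  show "phi \<nu> h W' (act g \<Lambda>) t = act (i_WW' h W W' g) (phi \<nu> h W' \<Lambda>) t"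
  proof (intro equalityI subsetI)
    fix x assume "x \<in> phi \<nu> h W' (act g \<Lambda>) t"
    then obtain a y where x: "x = g a + ?\<tau> y" "a \<in> \<Lambda> t" "y \<in> lat_dual \<nu> h W' \<Lambda> t"
      unfolding phi_def dual act_def by blast
    then have "x = i_WW' h W W' g (a + y)" using i_WW' by simp
    moreover have "a + y \<in> phi \<nu> h W' \<Lambda> t" unfolding phi_def using x(2,3) by blast
    ultimately show "x \<in> act (i_WW' h W W' g) (phi \<nu> h W' \<Lambda>) t" unfolding act_def by blast
  next
    fix x assume "x \<in> act (i_WW' h W W' g) (phi \<nu> h W' \<Lambda>) t"
    then obtain a y where x: "x = i_WW' h W W' g (a + y)" "a \<in> \<Lambda> t" "y \<in> lat_dual \<nu> h W' \<Lambda> t"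
      unfolding act_def phi_def by blast
    then have "x = g a + ?\<tau> y" using i_WW' by simp
    then show "x \<in> phi \<nu> h W' (act g \<Lambda>) t" unfolding phi_def dual act_def using x(2,3) by blast
  qed
qed

end

theorem mainTheorem13:
  fixes \<nu> :: "'d::division_ring \<Rightarrow> ereal" and \<pi> :: 'd and \<rho> :: "'d \<Rightarrow> 'd" and \<epsilon> :: 'd
    and sm :: "'v::ab_group_add \<Rightarrow> 'd \<Rightarrow> 'v" and h :: "'v \<Rightarrow> 'v \<Rightarrow> 'd"
    and W W' :: "'v set"
  assumes "local_setting \<nu> \<pi>"
    and "continuous_involution \<nu> \<rho>"
    and "fin_dim_right_vs sm"
    and "eps_hermitian sm \<rho> \<epsilon> h"
    and "non_degenerate h"
    and "isotropic h"
    and "max_totally_isotropic sm h W"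
    and "max_totally_isotropic sm h W'"
    and "direct_sum sm W W'"
  shows "(\<forall>\<Lambda>. lattice_fun sm \<nu> \<pi> W \<Lambda> \<longrightarrow> self_dual_lattice_fun sm \<nu> \<pi> h (phi \<nu> h W' \<Lambda>))
       \<and> (\<forall>\<Lambda> \<Lambda>' M t. lattice_fun sm \<nu> \<pi> W \<Lambda> \<longrightarrow> lattice_fun sm \<nu> \<pi> W \<Lambda>' \<longrightarrow>
             lattice_fun sm \<nu> \<pi> W M \<longrightarrow> 0 \<le> t \<longrightarrow> t \<le> 1 \<longrightarrow>
             affine_comb sm \<nu> W t \<Lambda> \<Lambda>' M \<longrightarrow>
             affine_comb sm \<nu> UNIV t (phi \<nu> h W' \<Lambda>) (phi \<nu> h W' \<Lambda>') (phi \<nu> h W' M))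
       \<and> (\<forall>g\<in>GL_on sm W. \<forall>\<Lambda>. lattice_fun sm \<nu> \<pi> W \<Lambda> \<longrightarrow>
             phi \<nu> h W' (act g \<Lambda>) = act (i_WW' h W W' g) (phi \<nu> h W' \<Lambda>))"
proof -
  interpret polarized_space \<nu> \<pi> \<rho> sm \<epsilon> h W W'
    using assms unfolding polarized_space_def valued_vector_space_def valued_involution_def
      right_vector_space_def polarized_space_axioms_def fin_dim_right_vs_def by blast
  show ?thesis
  proof (intro conjI allI ballI impI)
    fix \<Lambda> assume "lattice_fun sm \<nu> \<pi> W \<Lambda>"
    then show "self_dual_lattice_fun sm \<nu> \<pi> h (phi \<nu> h W' \<Lambda>)" by (rule phi_self_dual)
  next
    fix \<Lambda> \<Lambda>' M t assume "affine_comb sm \<nu> W t \<Lambda> \<Lambda>' M"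
    then show "affine_comb sm \<nu> UNIV t (phi \<nu> h W' \<Lambda>) (phi \<nu> h W' \<Lambda>') (phi \<nu> h W' M)"
      by (rule phi_affine_comb)
  next
    fix g \<Lambda> assume "g \<in> GL_on sm W" "lattice_fun sm \<nu> \<pi> W \<Lambda>"
    then show "phi \<nu> h W' (act g \<Lambda>) = act (i_WW' h W W' g) (phi \<nu> h W' \<Lambda>)"
      using phi_act lattice_fun_subset_W by blast
  qed
qed

end
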